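(* Under assumptions (B) and (F), let $h:\mathbb{R}\to\mathbb{R}$ be $a$-Lipschitz, i.e. $|h(x)-h(y)|\le C_h|a(x)-a(y)|$. Then there is a constant $C$ (not depending on $N$, $i$, $s$, $t$) such that for all $N\ge1$, $1\le i\le N$ and all $s,t\ge0$ with $|s-t|\le1$, $$E\big(|h(X^{N,i}_t)-h(X^{N,i}_s)|\big)\le C|t-s|^{q/\alpha}.$$
   Context: Fix $\alpha\in(0,1)$; $\nu$ is the law on $\mathbb{R}_+$ of $Y\ge0$ with $E[e^{-\lambda Y}]=e^{-\lambda^\alpha}$. Fix $0<q<\alpha$ and a $C^2$ odd function $a$ with $a(0)=0$, concave on $\mathbb{R}_+$, $a''/a'$ bounded, Lipschitz, strictly increasing, $a(x)=c+x^q$ for $x\ge1$. $\Pi(\mu,\tilde\mu)$: couplings; $\mu(f)=\int fd\mu$. Assumption (B): $b:\mathbb{R}_+\times\mathcal P_1(\mathbb{R})\to\mathbb{R}$ measurable, bounded, $b(0,\mu)\ge0$, $|b(x,\mu)-b(\tilde x,\tilde\mu)|\le C\big(|a(x)-a(\tilde x)|+\inf_{\pi\in\Pi(\mu,\tilde\mu)}\int|a(y)-a(y')|\pi(dy,dy')\big)$. Assumption (F): $f:\mathbb{R}\to\mathbb{R}_+$ bounded, Lipschitz, $f\ge\underline f>0$; $\psi:\mathbb{R}\to\mathbb{R}_+$ bounded, nonnegative, Lipschitz; $|f(x)-f(y)|+|\psi(x)-\psi(y)|\le C|a(x)-a(y)|$ for $x,y\ge0$; $\nu_0$ probability on $\mathbb{R}_+$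 with finite moment of order $\max(2\alpha,1)$, $\nu_0(\{0\})=0$. Finite system: $(\pi^i)_{i\ge1}$ i.i.d. Poisson random measures on $\mathbb{R}_+^3$ with intensity $ds\,dz\,\nu(du)$, $(X^i_0)$ i.i.d. $\sim\nu_0$ independent; $X^{N,i}_t=X^i_0+\int_0^t b(X^{N,i}_s,\mu^N_s)ds+\int\psi(X^{N,i}_{s-})\mathbf 1_{\{z\le f(X^{N,i}_{s-})\}}\pi^i(ds,dz,du)+N^{-1/\alpha}\sum_{j\ne i}\int u\mathbf 1_{\{z\le f(X^{N,j}_{s-})\}}\pi^j(ds,dz,du)$ (integrals over $[0,t]\times\mathbb{R}_+^2$), $\mu^N_t=\frac1N\sum_i\delta_{X^{N,i}_t}$. *)

theory Defs
  imports "HOL-Probability.Probability"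
begin

definition leftlim :: "(real \<Rightarrow> real) \<Rightarrow> real \<Rightarrow> real" where
  "leftlim g s = (if s \<le> 0 then g 0 else Lim (at_left s) g)"

definition cadlag :: "(real \<Rightarrow> real) \<Rightarrow> bool" where
  "cadlag g \<longleftrightarrow> (\<forall>t\<ge>0. continuous (at_right t) g) \<and> (\<forall>t>0. \<exists>l. (g \<longlongrightarrow> l) (at_left t))"

text \<open>Empirical measure (1/N) sum_{j=1..N} delta_{x j}.\<close>
definition empirical :: "nat \<Rightarrow> (nat \<Rightarrow> real) \<Rightarrow> real measure" where
  "empirical N x = distr (uniform_measure (count_space UNIV) {1..N}) borel x"

definition P1_meas :: "real measure set" where
  "P1_meas = {\<mu>. sets \<mu> = sets borel \<and> prob_space \<mu> \<and> integrable \<mu> (\<lambda>x. x)}"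

definition couplings_of :: "real measure \<Rightarrow> real measure \<Rightarrow> (real \<times> real) measure set" where
  "couplings_of \<mu> \<mu>' = {p. sets p = sets borel \<and> distr p borel fst = \<mu> \<and> distr p borel snd = \<mu>'}"

definition Wa :: "(real \<Rightarrow> real) \<Rightarrow> real measure \<Rightarrow> real measure \<Rightarrow> ennreal" where
  "Wa a \<mu> \<mu>' = (INF p\<in>couplings_of \<mu> \<mu>'. \<integral>\<^sup>+ yy. ennreal \<bar>a (fst yy) - a (snd yy)\<bar> \<partial>p)"

definition intensity :: "real measure \<Rightarrow> (real \<times> real \<times> real) measure" where
  "intensity \<nu> = density (lborel \<Otimes>\<^sub>M (lborel \<Otimes>\<^sub>M \<nu>)) (indicator ({0..} \<times> {0..} \<times> UNIV))"

definition poisson_random_measure :: "'w measure \<Rightarrow> 'b measure \<Rightarrow> ('w \<Rightarrow> 'b measure) \<Rightarrow> bool" where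
  "poisson_random_measure M L P \<longleftrightarrow>
     (\<forall>\<omega>\<in>space M. sets (P \<omega>) = sets L) \<and>
     (\<forall>A\<in>sets L. (\<lambda>\<omega>. emeasure (P \<omega>) A) \<in> borel_measurable M) \<and>
     (\<forall>A\<in>sets L. emeasure L A < \<infinity> \<longrightarrow>
        (\<forall>k::nat. measure M {\<omega>\<in>space M. emeasure (P \<omega>) A = of_nat k}
            = exp (- enn2real (emeasure L A)) * enn2real (emeasure L A) ^ k / fact k)) \<and>
     (\<forall>A\<in>sets L. emeasure L A = \<infinity> \<longrightarrow> (AE \<omega> in M. emeasure (P \<omega>) A = \<infinity>)) \<and>
     (\<forall>A::nat \<Rightarrow> 'b set. range A \<subseteq> sets L \<longrightarrow> disjoint_family A \<longrightarrow>
        prob_space.indep_vars M (\<lambda>_. borel) (\<lambda>j \<omega>. emeasure (P \<omega>) (A j)) UNIV)"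

definition prm_sigma :: "'w measure \<Rightarrow> 'b measure \<Rightarrow> ('w \<Rightarrow> 'b measure) \<Rightarrow> 'w set set" where
  "prm_sigma M L P = sigma_sets (space M)
     (\<Union>A\<in>sets L. \<Union>B\<in>sets (borel :: ennreal measure). {(\<lambda>\<omega>. emeasure (P \<omega>) A) -` B \<inter> space M})"

definition ownJ :: "(real \<Rightarrow> real) \<Rightarrow> (real \<Rightarrow> real) \<Rightarrow> (real \<Rightarrow> real) \<Rightarrow> real
                    \<Rightarrow> (real \<times> real \<times> real) measure \<Rightarrow> ennreal" where
  "ownJ \<psi> f g t Q = (\<integral>\<^sup>+ x. (case x of (s, z, u) \<Rightarrow>
      indicator ({0..t} \<times> {0..} \<times> {0..}) (s, z, u) * ennreal (\<psi> (leftlim g s))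
      * indicator {..f (leftlim g s)} z) \<partial>Q)"

definition crossJ :: "(real \<Rightarrow> real) \<Rightarrow> (real \<Rightarrow> real) \<Rightarrow> real
                    \<Rightarrow> (real \<times> real \<times> real) measure \<Rightarrow> ennreal" where
  "crossJ f g t Q = (\<integral>\<^sup>+ x. (case x of (s, z, u) \<Rightarrow>
      indicator ({0..t} \<times> {0..} \<times> {0..}) (s, z, u) * ennreal u
      * indicator {..f (leftlim g s)} z) \<partial>Q)"

definition particle_solution ::
  "'w measure \<Rightarrow> (real \<Rightarrow> real measure \<Rightarrow> real) \<Rightarrow> (real \<Rightarrow> real) \<Rightarrow> (real \<Rightarrow> real) \<Rightarrow> real
   \<Rightarrow> (nat \<Rightarrow> 'w \<Rightarrow> (real \<times> real \<times> real) measure) \<Rightarrow> (nat \<Rightarrow> 'w \<Rightarrow> real) \<Rightarrow> nat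
   \<Rightarrow> (nat \<Rightarrow> real \<Rightarrow> 'w \<Rightarrow> real) \<Rightarrow> bool" where
  "particle_solution M b f \<psi> \<alpha> \<pi> X0 N Y \<longleftrightarrow>
     (\<forall>i\<in>{1..N}. \<forall>t\<ge>0. Y i t \<in> borel_measurable M) \<and>
     (AE \<omega> in M. \<forall>i\<in>{1..N}. cadlag (\<lambda>t. Y i t \<omega>) \<and>
        (\<forall>t\<ge>0.
           set_integrable lborel {0..t} (\<lambda>s. b (Y i s \<omega>) (empirical N (\<lambda>j. Y j s \<omega>))) \<and>
           ownJ \<psi> f (\<lambda>s. Y i s \<omega>) t (\<pi> i \<omega>) < \<infinity> \<and>
           (\<forall>j\<in>{1..N}. crossJ f (\<lambda>s. Y j s \<omega>) t (\<pi> j \<omega>) < \<infinity>) \<and>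
           Y i t \<omega> = X0 i \<omega>
             + (LINT s:{0..t}|lborel. b (Y i s \<omega>) (empirical N (\<lambda>j. Y j s \<omega>)))
             + enn2real (ownJ \<psi> f (\<lambda>s. Y i s \<omega>) t (\<pi> i \<omega>))
             + real N powr (-1/\<alpha>) * (\<Sum>j\<in>{1..N}-{i}. enn2real (crossJ f (\<lambda>s. Y j s \<omega>) t (\<pi> j \<omega>)))))"

end

theory Submission
  imports Defs
begin

text \<open>The increment of particle \<open>i\<close> over a window of length \<open>\<delta>\<close> consists of the drift, of size
  \<open>O(\<delta>)\<close>, its own jumps, \<open>O(\<delta>)\<close> in mean, and the jumps \<open>N powr (-1/\<alpha>) * u\<close> received from the
  other particles, whose marks have the stable tail \<open>\<nu> {u<..} \<le> C * u powr (-\<alpha>)\<close>. As \<open>h\<close> is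
  Lipschitz for the concave gauge \<open>a\<close>, which grows like \<open>x powr q\<close>, it suffices to bound the mean
  of \<open>a\<close> at the increment. The received marks are split at \<open>R = (N * \<delta>) powr (1/\<alpha>)\<close> into dyadic
  shells. The small ones are summed in mean, \<open>N * \<delta> * R powr (1 - \<alpha>)\<close>, and enter through
  \<open>x powr q \<le> \<epsilon> powr q + \<epsilon> powr (q - 1) * x\<close> with \<open>\<epsilon> = \<delta> powr (1/\<alpha>)\<close>; the large ones, which are
  few, enter through the subadditivity of \<open>x powr q\<close> shell by shell, \<open>N * \<delta> * R powr (q - \<alpha>)\<close>,
  finite because \<open>q < \<alpha>\<close>. After scaling, both are \<open>O(\<delta> powr (q/\<alpha>))\<close> uniformly in \<open>N\<close>.
  Positivity of the particles, needed because \<open>b\<close>, \<open>f\<close> and \<open>\<psi>\<close> are controlled only on \<open>[0, \<infinity>)\<close>,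
  follows from \<open>b x \<mu> \<ge> - C * x\<close> and the nonnegativity of the jumps.\<close>

lemma powr_add_le_add_powr:
  fixes x y q :: real
  assumes "0 \<le> x" "0 \<le> y" "0 < q" "q \<le> 1"
  shows "(x + y) powr q \<le> x powr q + y powr q"
proof (cases "x + y = 0")
  case True
  then show ?thesis using assms by simp
next
  case False
  then have s: "0 < x + y" using assms by auto
  have frac_le: "u / (x + y) \<le> (u / (x + y)) powr q" if "0 \<le> u" "u \<le> x + y" for u
  proof (cases "u = 0")
    case False
    have "(u / (x + y)) powr 1 \<le> (u / (x + y)) powr q"
      using that s assms False by (intro powr_mono') auto
    then show ?thesis using that s by simp
  qed simp
  have "1 = x / (x + y) + y / (x + y)" using s by (simp add: add_divide_distrib[symmetric])
  also have "\<dots> \<le> (x / (x + y)) powr q + (y / (x + y)) powr q"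
    using frac_le[of x] frac_le[of y] assms by simp
  also have "\<dots> = (x powr q + y powr q) / (x + y) powr q"
    using assms s by (simp add: powr_divide add_divide_distrib)
  finally show ?thesis using s by (simp add: le_divide_eq)
qed

lemma powr_sum_le_sum_powr:
  fixes g :: "nat \<Rightarrow> real"
  assumes "\<And>i. 0 \<le> g i" "0 < q" "q \<le> 1"
  shows "(\<Sum>i<n. g i) powr q \<le> (\<Sum>i<n. g i powr q)"
proof (induction n)
  case (Suc n)
  have "(\<Sum>i<Suc n. g i) powr q \<le> (\<Sum>i<n. g i) powr q + g n powr q"
    using powr_add_le_add_powr[of "\<Sum>i<n. g i" "g n" q] assms by (simp add: sum_nonneg)
  then show ?case using Suc by simp
qed simp

lemma powr_suminf_le_suminf_powr:
  fixes g :: "nat \<Rightarrow> real"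
  assumes g: "\<And>i. 0 \<le> g i" and q: "0 < q" "q \<le> 1" and gq: "summable (\<lambda>i. g i powr q)"
  shows "summable g" "(\<Sum>i. g i) powr q \<le> (\<Sum>i. g i powr q)"
proof -
  \<comment> \<open>Summability of the \<open>q\<close>-th powers forces \<open>g i < 1\<close> eventually, and then \<open>g i \<le> g i powr q\<close>.\<close>
  have "eventually (\<lambda>i. g i powr q < 1) sequentially"
    using summable_LIMSEQ_zero[OF gq] by (rule order_tendstoD) simp
  then have "eventually (\<lambda>i. norm (g i) \<le> g i powr q) sequentially"
  proof (rule eventually_mono)
    fix i assume small: "g i powr q < 1"
    then have "g i < 1" using g[of i] q ge_one_powr_ge_zero[of "g i" q] by fastforce
    show "norm (g i) \<le> g i powr q"
    proof (cases "g i = 0")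
      case False
      have "g i powr 1 \<le> g i powr q" using g[of i] \<open>g i < 1\<close> q False by (intro powr_mono') auto
      then show ?thesis using g[of i] by simp
    qed simp
  qed
  then show sg: "summable g" using gq by (rule summable_comparison_test_ev)
  show "(\<Sum>i. g i) powr q \<le> (\<Sum>i. g i powr q)"
  proof (rule LIMSEQ_le_const2)
    show "(\<lambda>n. (\<Sum>i<n. g i) powr q) \<longlonglongrightarrow> (\<Sum>i. g i) powr q"
      using summable_LIMSEQ[OF sg] g q by (intro tendsto_powr2) (auto simp: sum_nonneg)
    have "(\<Sum>i<n. g i) powr q \<le> (\<Sum>i. g i powr q)" for n
      using order_trans[OF powr_sum_le_sum_powr[of g q n] sum_le_suminf[OF gq]] g q by auto
    then show "\<exists>N. \<forall>n\<ge>N. (\<Sum>i<n. g i) powr q \<le> (\<Sum>i. g i powr q)" by blast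
  qed
qed

section \<open>Powers of extended nonnegative reals\<close>

definition enn_powr :: "ennreal \<Rightarrow> real \<Rightarrow> ennreal" (infixr "powr\<^sub>e" 80) where
  "x powr\<^sub>e q = (if x = \<top> then \<top> else ennreal (enn2real x powr q))"

lemma enn_powr_ennreal: "0 \<le> x \<Longrightarrow> ennreal x powr\<^sub>e q = ennreal (x powr q)"
  by (simp add: enn_powr_def)

lemma enn_powr_top [simp]: "\<top> powr\<^sub>e q = \<top>"
  and enn_powr_zero [simp]: "0 powr\<^sub>e q = 0"
  by (simp_all add: enn_powr_def)

lemma enn_powr_mono:
  assumes "0 < q" "x \<le> y"
  shows "x powr\<^sub>e q \<le> y powr\<^sub>e q"
proof (cases "y = \<top>")
  case False
  then obtain u v where "x = ennreal u" "y = ennreal v" "0 \<le> u" "u \<le> v"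
    using assms(2) by (cases x; cases y) (auto simp: top_unique)
  then show ?thesis using assms by (simp add: enn_powr_ennreal ennreal_leI powr_mono2)
qed simp

lemma enn_powr_add_le:
  assumes "0 < q" "q \<le> 1"
  shows "(x + y) powr\<^sub>e q \<le> x powr\<^sub>e q + y powr\<^sub>e q"
proof (cases "x = \<top> \<or> y = \<top>")
  case False
  then obtain u v where "x = ennreal u" "y = ennreal v" "0 \<le> u" "0 \<le> v"
    by (cases x; cases y) auto
  then show ?thesis
    using powr_add_le_add_powr[of u v q] assms
    by (simp add: enn_powr_ennreal ennreal_leI flip: ennreal_plus)
qed auto

lemma enn_powr_sum_le:
  assumes "0 < q" "q \<le> 1"
  shows "(\<Sum>i\<in>I. f i) powr\<^sub>e q \<le> (\<Sum>i\<in>I. f i powr\<^sub>e q)"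
proof (induction I rule: infinite_finite_induct)
  case (insert x F)
  then show ?case
    using enn_powr_add_le[OF assms, of "f x" "sum f F"] by (simp add: add_left_mono order_trans)
qed simp_all

lemma enn_powr_suminf_le:
  assumes q: "0 < q" "q \<le> 1"
  shows "(\<Sum>i. f i) powr\<^sub>e q \<le> (\<Sum>i. f i powr\<^sub>e q)"
proof (cases "(\<Sum>i. f i powr\<^sub>e q) = \<top>")
  case False
  have "f i powr\<^sub>e q \<le> (\<Sum>i. f i powr\<^sub>e q)" for i
    using sum_le_suminf[of "\<lambda>i. f i powr\<^sub>e q" "{i}"] by simp
  then have fin: "f i \<noteq> \<top>" for i using False by (metis enn_powr_top top.extremum_unique)
  define g where "g i = enn2real (f i)" for i
  have g: "0 \<le> g i" "f i = ennreal (g i)" for i using fin[of i] by (auto simp: g_def less_top)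
  have fq: "f i powr\<^sub>e q = ennreal (g i powr q)" for i by (simp add: g enn_powr_ennreal)
  have gq: "summable (\<lambda>i. g i powr q)"
    using False unfolding fq by (intro summable_suminf_not_top) auto
  note g_sums = powr_suminf_le_suminf_powr[OF g(1) q gq]
  have "(\<Sum>i. f i) = ennreal (\<Sum>i. g i)" using g_sums(1) g by (simp add: suminf_ennreal2)
  moreover have "(\<Sum>i. f i powr\<^sub>e q) = ennreal (\<Sum>i. g i powr q)"
    unfolding fq using gq by (intro suminf_ennreal2) auto
  ultimately show ?thesis
    using g_sums g by (simp add: enn_powr_ennreal suminf_nonneg ennreal_leI)
qed simp

lemma enn_powr_cmult:
  assumes "0 < q" "0 \<le> c"
  shows "(ennreal c * x) powr\<^sub>e q = ennreal (c powr q) * x powr\<^sub>e q"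
proof (cases "x = \<top>")
  case True
  then show ?thesis using assms by (cases "c = 0") (auto simp: ennreal_mult_top)
next
  case False
  then obtain u where "x = ennreal u" "0 \<le> u" by (cases x) auto
  then show ?thesis
    using assms by (simp add: enn_powr_ennreal powr_mult flip: ennreal_mult)
qed

lemma enn_powr_of_nat_le:
  assumes "0 < q" "q \<le> 1"
  shows "of_nat k powr\<^sub>e q \<le> (of_nat k :: ennreal)"
proof -
  have "real k powr q \<le> real k"
    using assms powr_mono[of q 1 "real k"] by (cases "k = 0") auto
  then show ?thesis
    using enn_powr_ennreal[of "real k" q] by (simp add: ennreal_of_nat_eq_real_of_nat ennreal_leI)
qed

lemma enn_powr_le_split:
  assumes "0 < q" "q \<le> 1" "0 < e"
  shows "x powr\<^sub>e q \<le> ennreal (e powr q) + ennreal (e powr (q - 1)) * x"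
proof (cases "x = \<top>")
  case True
  then show ?thesis using assms by (simp add: ennreal_mult_top)
next
  case False
  then obtain u where u: "x = ennreal u" "0 \<le> u" by (cases x) auto
  have "u powr q \<le> e powr q + e powr (q - 1) * u"
  proof (cases "u \<le> e")
    case True
    then show ?thesis using assms u powr_mono2[of q u e] by (simp add: add_increasing2)
  next
    case False
    then have "u powr q = u powr (q - 1) * u" using assms by (simp add: powr_diff)
    also have "\<dots> \<le> e powr (q - 1) * u"
      using False assms u by (intro mult_right_mono powr_mono2') auto
    finally show ?thesis by (simp add: add_increasing)
  qed
  then show ?thesis
    using u assms by (simp add: enn_powr_ennreal ennreal_leI flip: ennreal_mult ennreal_plus)
qed

lemma enn_powr_jump_split:
  fixes m :: "'j \<Rightarrow> nat \<Rightarrow> ennreal" and w :: "nat \<Rightarrow> real"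
  assumes q: "0 < q" "q \<le> 1" and e: "0 < e" and c: "0 \<le> c" and w: "\<And>k. 0 \<le> w k"
    and m: "\<And>j k. j \<in> J \<Longrightarrow> \<exists>n::nat. m j k = of_nat n"
  shows "(ennreal c * (S + (\<Sum>j\<in>J. \<Sum>k. ennreal (w k) * m j k))) powr\<^sub>e q
     \<le> ennreal (e powr q) + ennreal (e powr (q - 1)) * (ennreal c * S)
       + ennreal (c powr q) * (\<Sum>j\<in>J. \<Sum>k. ennreal (w k powr q) * m j k)"
proof -
  define L where "L = (\<Sum>j\<in>J. \<Sum>k. ennreal (w k) * m j k)"
  \<comment> \<open>Counts are integers, so \<open>(w n) powr q \<le> w powr q * n\<close> for every shell.\<close>
  have "L powr\<^sub>e q \<le> (\<Sum>j\<in>J. (\<Sum>k. ennreal (w k) * m j k) powr\<^sub>e q)"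
    unfolding L_def by (rule enn_powr_sum_le[OF q])
  also have "\<dots> \<le> (\<Sum>j\<in>J. \<Sum>k. (ennreal (w k) * m j k) powr\<^sub>e q)"
    by (intro sum_mono enn_powr_suminf_le[OF q])
  also have "\<dots> \<le> (\<Sum>j\<in>J. \<Sum>k. ennreal (w k powr q) * m j k)"
  proof (intro sum_mono suminf_le)
    fix j k assume "j \<in> J"
    then obtain n where "m j k = of_nat n" using m by blast
    then show "(ennreal (w k) * m j k) powr\<^sub>e q \<le> ennreal (w k powr q) * m j k"
      using w q by (simp add: enn_powr_cmult enn_powr_of_nat_le mult_left_mono)
  qed auto
  finally have L: "L powr\<^sub>e q \<le> (\<Sum>j\<in>J. \<Sum>k. ennreal (w k powr q) * m j k)" .
  have "(ennreal c * (S + L)) powr\<^sub>e q \<le> (ennreal c * S) powr\<^sub>e q + (ennreal c * L) powr\<^sub>e q"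
    unfolding distrib_left by (rule enn_powr_add_le[OF q])
  also have "\<dots> \<le> (ennreal (e powr q) + ennreal (e powr (q - 1)) * (ennreal c * S))
      + ennreal (c powr q) * (\<Sum>j\<in>J. \<Sum>k. ennreal (w k powr q) * m j k)"
    using L by (intro add_mono enn_powr_le_split[OF q e])
      (simp add: enn_powr_cmult[OF q(1) c] mult_left_mono)
  finally show ?thesis unfolding L_def .
qed

lemma concave_on_subadditive:
  fixes a :: "real \<Rightarrow> real"
  assumes concave: "concave_on {0..} a" and a0: "a 0 = 0" and xy: "0 \<le> x" "0 \<le> y"
  shows "a (x + y) \<le> a x + a y"
proof (cases "x + y = 0")
  case False
  then have s: "0 < x + y" using xy by simp
  have scale: "u / (x + y) * a (x + y) \<le> a u" if "0 \<le> u" "u \<le> x + y" for u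
  proof -
    have "convex_on {0..} (\<lambda>x. - a x)" using concave by (simp add: concave_on_def)
    from convex_onD[OF this, of "u / (x + y)" 0 "x + y"] that s a0
    show ?thesis by simp
  qed
  have "a (x + y) = x / (x + y) * a (x + y) + y / (x + y) * a (x + y)"
    using s by (simp add: add_divide_distrib[symmetric] distrib_right[symmetric])
  also have "\<dots> \<le> a x + a y" using scale[of x] scale[of y] xy by simp
  finally show ?thesis .
next
  case True
  with xy have "x = 0" "y = 0" by auto
  with a0 show ?thesis by simp
qed

lemma abs_diff_le_of_concave:
  fixes a :: "real \<Rightarrow> real"
  assumes concave: "concave_on {0..} a" and a0: "a 0 = 0" and mono: "mono a"
    and xy: "0 \<le> x" "0 \<le> y"
  shows "\<bar>a x - a y\<bar> \<le> a \<bar>x - y\<bar>"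
proof -
  have incr: "\<bar>a v - a u\<bar> \<le> a \<bar>v - u\<bar>" if "0 \<le> u" "u \<le> v" for u v
  proof -
    have "a v - a u \<le> a (v - u)"
      using concave_on_subadditive[OF concave a0, of u "v - u"] that by simp
    moreover have "a u \<le> a v" using monoD[OF mono that(2)] .
    ultimately show ?thesis using that by simp
  qed
  show ?thesis
  proof (cases "y \<le> x")
    case False
    then show ?thesis using incr[of x y] xy by (simp add: abs_minus_commute)
  qed (use incr[of y x] xy in simp)
qed

lemma le_powr_of_lipschitz_tail:
  fixes a :: "real \<Rightarrow> real"
  assumes lip: "\<forall>x y. \<bar>a x - a y\<bar> \<le> L * \<bar>x - y\<bar>" and a0: "a 0 = 0"
    and tail: "\<forall>x\<ge>1. a x = c + x powr q" and q: "0 < q" "q \<le> 1" and x: "0 \<le> x"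
  shows "a x \<le> (\<bar>L\<bar> + \<bar>c\<bar> + 1) * x powr q"
proof (cases "x \<le> 1")
  case True
  have "a x \<le> \<bar>L\<bar> * x"
    using lip[rule_format, of x 0] a0 x mult_right_mono[OF abs_ge_self[of L] x] by simp
  also have "\<dots> \<le> \<bar>L\<bar> * x powr q"
  proof (cases "x = 0")
    case False
    then have "x powr 1 \<le> x powr q" using True x q by (intro powr_mono') auto
    then show ?thesis using x by (simp add: mult_left_mono)
  qed simp
  finally show ?thesis by (smt (verit) mult_right_mono powr_ge_zero)
next
  case False
  then have "1 \<le> x powr q" using q by (simp add: ge_one_powr_ge_zero)
  then have "\<bar>c\<bar> \<le> \<bar>c\<bar> * x powr q" by (simp add: mult_le_cancel_left1)
  then have "a x \<le> (\<bar>c\<bar> + 1) * x powr q" using False tail by (simp add: distrib_right)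
  then show ?thesis by (smt (verit) mult_right_mono powr_ge_zero)
qed

lemma lipschitz_borel_measurable:
  fixes g :: "real \<Rightarrow> real"
  assumes "\<forall>x y. \<bar>g x - g y\<bar> \<le> L * \<bar>x - y\<bar>"
  shows "g \<in> borel_measurable borel"
proof -
  have "\<bar>g x - g y\<bar> \<le> \<bar>L\<bar> * \<bar>x - y\<bar>" for x y
    using assms mult_right_mono[OF abs_ge_self[of L], of "\<bar>x - y\<bar>"] by (meson abs_ge_zero order_trans)
  then have "\<bar>L\<bar>-lipschitz_on UNIV g" by (intro lipschitz_onI) (auto simp: dist_real_def)
  then show ?thesis by (intro borel_measurable_continuous_onI lipschitz_on_continuous_on)
qed

lemma le_max_zero_mult: "u \<le> C * v \<Longrightarrow> 0 \<le> v \<Longrightarrow> u \<le> max C 0 * (v :: real)"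
  by (metis max.cobounded1 mult_right_mono order_trans)

lemma empirical_in_P1_meas:
  assumes N: "1 \<le> N"
  shows "empirical N x \<in> P1_meas"
proof -
  let ?U = "uniform_measure (count_space UNIV) {1..N}"
  have ps: "prob_space ?U" using N by (intro prob_space_uniform_measure) auto
  have "(\<integral>\<^sup>+ i. ennreal (norm (x i)) \<partial>?U) < \<infinity>"
    using N by (simp add: nn_integral_uniform_measure nn_integral_indicator_finite
        ennreal_of_nat_eq_real_of_nat divide_ennreal sum_nonneg)
  then have "integrable ?U x" by (simp add: integrable_iff_bounded)
  then have "integrable (empirical N x) (\<lambda>y. y)"
    unfolding empirical_def by (subst integrable_distr_eq) auto
  moreover have "prob_space (empirical N x)"
    unfolding empirical_def by (rule prob_space.prob_space_distr[OF ps]) simp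
  ultimately show ?thesis by (simp add: P1_meas_def empirical_def)
qed

lemma Wa_self:
  assumes "\<mu> \<in> P1_meas"
  shows "Wa a \<mu> \<mu> = 0"
proof -
  have sm: "sets \<mu> = sets borel" using assms by (simp add: P1_meas_def)
  let ?p = "distr \<mu> borel (\<lambda>y. (y, y))"
  have diag [measurable]: "(\<lambda>y::real. (y, y)) \<in> \<mu> \<rightarrow>\<^sub>M borel"
    using sm by (simp add: measurable_cong_sets[OF sm refl])
  have marg: "distr ?p borel g = \<mu>" if "g \<in> {fst, snd}" for g :: "real \<times> real \<Rightarrow> real"
  proof -
    have "distr ?p borel g = distr \<mu> borel (g \<circ> (\<lambda>y. (y, y)))"
      using that by (intro distr_distr[OF _ diag])
        (auto simp: borel_measurable_continuous_onI continuous_on_fst continuous_on_snd)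
    also have "\<dots> = distr \<mu> borel (\<lambda>x. x)" using that by (auto simp: comp_def)
    also have "\<dots> = \<mu>" using sm by (intro distr_id2) simp
    finally show ?thesis .
  qed
  have "closed {yy::real \<times> real. fst yy = snd yy}"
    by (intro closed_Collect_eq continuous_intros)
  then have "AE yy in ?p. fst yy = snd yy"
    by (subst AE_distr_iff[OF diag]) (auto intro: borel_closed)
  then have "AE yy in ?p. ennreal \<bar>a (fst yy) - a (snd yy)\<bar> = 0" by (rule AE_mp) auto
  then have "(\<integral>\<^sup>+ yy. ennreal \<bar>a (fst yy) - a (snd yy)\<bar> \<partial>?p) = (\<integral>\<^sup>+ yy. 0 \<partial>?p)"
    by (rule nn_integral_cong_AE)
  then have "(\<integral>\<^sup>+ yy. ennreal \<bar>a (fst yy) - a (snd yy)\<bar> \<partial>?p) = 0" by simp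
  moreover have "?p \<in> couplings_of \<mu> \<mu>" using marg by (simp add: couplings_of_def)
  ultimately have "Wa a \<mu> \<mu> \<le> 0" unfolding Wa_def by (intro INF_lower2[of ?p]) auto
  then show ?thesis by simp
qed

lemma drift_lower_bound:
  fixes b :: "real \<Rightarrow> real measure \<Rightarrow> real"
  assumes b_0: "\<forall>\<mu>\<in>P1_meas. b 0 \<mu> \<ge> 0"
    and b_lip: "\<forall>x\<ge>0. \<forall>x'\<ge>0. \<forall>\<mu>\<in>P1_meas. \<forall>\<mu>'\<in>P1_meas.
                 ennreal \<bar>b x \<mu> - b x' \<mu>'\<bar> \<le> ennreal C * (ennreal \<bar>a x - a x'\<bar> + Wa a \<mu> \<mu>')"
    and a0: "a 0 = 0" and x: "0 \<le> x" and mu: "\<mu> \<in> P1_meas"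
  shows "- (max C 0 * \<bar>a x\<bar>) \<le> b x \<mu>"
proof -
  have "ennreal \<bar>b x \<mu> - b 0 \<mu>\<bar> \<le> ennreal C * ennreal \<bar>a x\<bar>"
    using b_lip[rule_format, of x 0 \<mu> \<mu>] x mu a0 Wa_self[OF mu] by simp
  also have "\<dots> = ennreal (max C 0 * \<bar>a x\<bar>)"
    by (cases "C \<le> 0") (auto simp: ennreal_mult[symmetric] ennreal_neg max_def)
  finally have "\<bar>b x \<mu> - b 0 \<mu>\<bar> \<le> max C 0 * \<bar>a x\<bar>"
    by (subst (asm) ennreal_le_iff) auto
  then show ?thesis using b_0 mu by auto
qed

section \<open>Poisson random measures with stable marks\<close>

lemma poisson_sums_one: "(\<lambda>k. exp (- m) * m ^ k / fact k) sums (1::real)"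
  using sums_mult[OF exp_converges[of m], of "exp (- m)"] by (simp add: exp_minus field_simps)

lemma poisson_sums_mean: "(\<lambda>k. real k * (exp (- m) * m ^ k / fact k)) sums (m::real)"
proof -
  have "(\<lambda>n. (m * exp (- m)) * (m ^ n /\<^sub>R fact n)) sums ((m * exp (- m)) * exp m)"
    by (rule sums_mult[OF exp_converges])
  then have "(\<lambda>n. real (Suc n) * (exp (- m) * m ^ Suc n / fact (Suc n))) sums m"
    by (simp add: exp_minus field_simps del: of_nat_Suc)
  then show ?thesis by (subst (asm) sums_Suc_iff) simp
qed

lemma poisson_random_measure_count:
  assumes M: "prob_space M" and P: "poisson_random_measure M L P"
    and A: "A \<in> sets L" and fin: "emeasure L A < \<infinity>"
  shows "AE \<omega> in M. \<exists>k::nat. emeasure (P \<omega>) A = of_nat k"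
    and "(\<integral>\<^sup>+ \<omega>. emeasure (P \<omega>) A \<partial>M) = emeasure L A"
proof -
  interpret prob_space M by (rule M)
  define m where "m = enn2real (emeasure L A)"
  have m0: "0 \<le> m" and LA: "emeasure L A = ennreal m"
    using fin by (auto simp: m_def less_top[symmetric])
  define Y where "Y \<omega> = emeasure (P \<omega>) A" for \<omega>
  have Ym: "Y \<in> borel_measurable M" unfolding Y_def using P A by (simp add: poisson_random_measure_def)
  define E where "E k = {\<omega>\<in>space M. Y \<omega> = of_nat k}" for k :: nat
  have Es: "E k \<in> sets M" for k unfolding E_def using Ym by measurable
  have eE: "emeasure M (E k) = ennreal (exp (- m) * m ^ k / fact k)" for k
    using P A fin unfolding poisson_random_measure_def E_def Y_def m_def
    by (auto simp: emeasure_eq_measure)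
  have dE: "disjoint_family E" unfolding disjoint_family_on_def E_def by auto
  have "emeasure M (\<Union>k. E k) = (\<Sum>k. emeasure M (E k))"
    using Es dE by (intro suminf_emeasure[symmetric]) auto
  also have "\<dots> = 1" unfolding eE using m0 poisson_sums_one[of m]
    by (subst suminf_ennreal_eq) auto
  finally have "emeasure M (space M - (\<Union>k. E k)) = 0"
    using Es by (simp add: emeasure_eq_measure prob_compl sets.countable_UN)
  then have AEU: "AE \<omega> in M. \<omega> \<in> (\<Union>k. E k)"
    using Es by (subst AE_iff_measurable[of "space M - (\<Union>k. E k)"]) auto
  then show "AE \<omega> in M. \<exists>k::nat. emeasure (P \<omega>) A = of_nat k"
    by (rule AE_mp) (auto simp: E_def Y_def)
  have "AE \<omega> in M. Y \<omega> = (\<Sum>k. of_nat k * indicator (E k) \<omega>)"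
    using AEU
  proof (rule AE_mp, intro AE_I2 impI)
    fix \<omega> assume "\<omega> \<in> (\<Union>k. E k)"
    then obtain k where k: "\<omega> \<in> E k" by auto
    have "(\<Sum>j. (of_nat j :: ennreal) * indicator (E j) \<omega>) = (\<Sum>j. if j = k then of_nat k else 0)"
      using k dE by (intro suminf_cong) (auto simp: disjoint_family_on_def indicator_def)
    also have "\<dots> = of_nat k" using sums_single[of k "\<lambda>_. of_nat k :: ennreal"] sums_unique by fastforce
    finally show "Y \<omega> = (\<Sum>j. of_nat j * indicator (E j) \<omega>)" using k by (simp add: E_def)
  qed
  then have "(\<integral>\<^sup>+ \<omega>. Y \<omega> \<partial>M) = (\<Sum>k. \<integral>\<^sup>+ \<omega>. of_nat k * indicator (E k) \<omega> \<partial>M)"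
    using Es by (simp add: nn_integral_cong_AE nn_integral_suminf)
  also have "\<dots> = (\<Sum>k. ennreal (real k * (exp (- m) * m ^ k / fact k)))"
    using Es by (intro suminf_cong)
      (simp add: nn_integral_cmult_indicator eE ennreal_of_nat_eq_real_of_nat flip: ennreal_mult')
  also have "\<dots> = ennreal m" using m0 by (intro suminf_ennreal_eq poisson_sums_mean) auto
  finally show "(\<integral>\<^sup>+ \<omega>. emeasure (P \<omega>) A \<partial>M) = emeasure L A" using LA by (simp add: Y_def)
qed

lemma nn_integral_weighted_counts:
  assumes "\<And>j k. j \<in> J \<Longrightarrow> m j k \<in> borel_measurable M"
  shows "(\<integral>\<^sup>+ \<omega>. (\<Sum>j\<in>J. \<Sum>k. ennreal (w k) * m j k \<omega>) \<partial>M)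
       = (\<Sum>j\<in>J. \<Sum>k. ennreal (w k) * (\<integral>\<^sup>+ \<omega>. m j k \<omega> \<partial>M))"
proof -
  have "(\<integral>\<^sup>+ \<omega>. (\<Sum>k. ennreal (w k) * m j k \<omega>) \<partial>M) = (\<Sum>k. ennreal (w k) * (\<integral>\<^sup>+ \<omega>. m j k \<omega> \<partial>M))"
    if "j \<in> J" for j
    using assms[OF that] by (simp add: nn_integral_suminf nn_integral_cmult)
  moreover have "(\<lambda>\<omega>. \<Sum>k. ennreal (w k) * m j k \<omega>) \<in> borel_measurable M" if "j \<in> J" for j
  proof -
    note [measurable] = assms[OF that]
    show ?thesis by measurable
  qed
  ultimately show ?thesis by (simp add: nn_integral_sum)
qed

lemma sets_intensity:
  assumes "sets \<nu> = sets (borel :: real measure)"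
  shows "sets (intensity \<nu>) = sets (borel \<Otimes>\<^sub>M (borel \<Otimes>\<^sub>M borel))"
  unfolding intensity_def sets_density
  by (intro sets_pair_measure_cong) (simp_all add: assms sets_pair_measure_cong)

lemma emeasure_intensity_box:
  assumes nu: "prob_space \<nu>" "sets \<nu> = sets (borel :: real measure)"
    and s: "0 \<le> s" and F: "0 \<le> F" and U: "U \<in> sets borel"
  shows "emeasure (intensity \<nu>) ({s<..t} \<times> {0..F} \<times> U)
       = emeasure lborel {s<..t} * ennreal F * emeasure \<nu> U"
proof -
  have sf: "sigma_finite_measure \<nu>" using nu(1) by (rule prob_space_imp_sigma_finite)
  have sf2: "sigma_finite_measure (lborel \<Otimes>\<^sub>M \<nu>)"
    by (intro sigma_finite_pair_measure sf) (simp add: lborel.sigma_finite_measure_axioms)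
  have Us: "U \<in> sets \<nu>" using U nu by simp
  have "({0..} \<times> {0..} \<times> UNIV :: (real \<times> real \<times> real) set) \<in> sets (lborel \<Otimes>\<^sub>M (lborel \<Otimes>\<^sub>M \<nu>))"
    by (intro pair_measureI) (auto intro: borel_closed simp: nu(2))
  moreover have "{s<..t} \<times> {0..F} \<times> U \<in> sets (lborel \<Otimes>\<^sub>M (lborel \<Otimes>\<^sub>M \<nu>))"
    using Us by (intro pair_measureI) (auto intro: borel_closed)
  moreover have "({0..} \<times> {0..} \<times> UNIV) \<inter> ({s<..t} \<times> {0..F} \<times> U) = {s<..t} \<times> {0..F} \<times> U"
    using s by auto
  ultimately have "emeasure (intensity \<nu>) ({s<..t} \<times> {0..F} \<times> U)
      = emeasure (lborel \<Otimes>\<^sub>M (lborel \<Otimes>\<^sub>M \<nu>)) ({s<..t} \<times> {0..F} \<times> U)"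
    unfolding intensity_def by (simp add: emeasure_restricted)
  also have "\<dots> = emeasure lborel {s<..t} * (emeasure lborel {0..F} * emeasure \<nu> U)"
    using Us by (simp add: sigma_finite_measure.emeasure_pair_measure_Times[OF sf2]
        sigma_finite_measure.emeasure_pair_measure_Times[OF sf])
  finally show ?thesis using F by (simp add: mult.assoc)
qed

text \<open>Tail of the one-sided \<open>\<alpha>\<close>-stable law, from its Laplace transform at \<open>1/x\<close> and \<open>1 - e\<^sup>-\<^sup>\<lambda> \<le> \<lambda>\<close>.\<close>
lemma stable_tail_le:
  assumes nu: "prob_space \<nu>" "sets \<nu> = sets (borel :: real measure)" "emeasure \<nu> {..<0} = 0"
       "\<forall>l\<ge>0. (\<integral>y. exp (- l * y) \<partial>\<nu>) = exp (- (l powr \<alpha>))"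
    and x: "0 < x"
  shows "emeasure \<nu> {x<..} \<le> ennreal (x powr (- \<alpha>) / (1 - exp (- 1)))"
proof -
  interpret prob_space \<nu> by (rule nu(1))
  define l where "l = 1 / x"
  have l0: "0 < l" using x by (simp add: l_def)
  have ind: "{x<..} \<in> sets \<nu>" using nu(2) by simp
  have ii: "integrable \<nu> (indicator {x<..} :: real \<Rightarrow> real)"
    by (rule integrable_real_indicator[OF ind]) (simp add: less_top[symmetric])
  have AE0: "AE y in \<nu>. 0 \<le> y"
    using nu(2,3) sets_eq_imp_space_eq[OF nu(2)] by (subst AE_iff_measurable[of "{..<0}"]) auto
  have "exp (- (l powr \<alpha>)) = (\<integral>y. exp (- l * y) \<partial>\<nu>)" using nu(4) l0 by simp
  also have "\<dots> \<le> (\<integral>y. 1 - (1 - exp (- 1)) * indicator {x<..} y \<partial>\<nu>)"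
  proof (rule integral_mono_AE)
    show "integrable \<nu> (\<lambda>y. exp (- l * y))"
      using AE0 nu(2) l0 by (intro integrable_const_bound[where B = 1])
        (auto elim!: AE_mp simp: measurable_cong_sets[OF nu(2) refl])
    show "integrable \<nu> (\<lambda>y. 1 - (1 - exp (- 1::real)) * indicator {x<..} y)"
      using ii by simp
    show "AE y in \<nu>. exp (- l * y) \<le> 1 - (1 - exp (- 1::real)) * indicator {x<..} y"
      using AE0
    proof (rule AE_mp, intro AE_I2 impI)
      fix y :: real assume y: "0 \<le> y"
      show "exp (- l * y) \<le> 1 - (1 - exp (- 1::real)) * indicator {x<..} y"
      proof (cases "x < y")
        case True
        then have "1 < l * y" using x by (simp add: l_def field_simps)
        then show ?thesis using True by (simp add: indicator_def)
      qed (use y l0 in simp)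
    qed
  qed
  also have "\<dots> = 1 - (1 - exp (- 1)) * measure \<nu> {x<..}"
    using ind ii by (subst Bochner_Integration.integral_diff) (auto simp: prob_space)
  finally have "(1 - exp (- 1)) * measure \<nu> {x<..} \<le> l powr \<alpha>"
    using exp_ge_add_one_self[of "- (l powr \<alpha>)"] by simp
  moreover have "l powr \<alpha> = x powr (- \<alpha>)" using x by (simp add: l_def powr_minus_divide powr_divide)
  ultimately show ?thesis by (simp add: emeasure_eq_measure ennreal_leI field_simps)
qed

section \<open>Cadlag paths and jump integrals\<close>

lemma cadlag_measurable:
  assumes "cadlag g"
  shows "(\<lambda>s. g (max s 0)) \<in> borel_measurable borel"
proof (rule borel_measurable_LIMSEQ_real)
  \<comment> \<open>Approximate from the right on the grids \<open>\<int>/(n+1)\<close>.\<close>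
  define r where "r n x = real_of_int \<lceil>real (Suc n) * x\<rceil> / real (Suc n)" for n x
  show "(\<lambda>s. g (r n (max s 0))) \<in> borel_measurable borel" for n
  proof -
    have "(\<lambda>s. (\<lambda>k s. g (real_of_int k / real (Suc n))) \<lceil>real (Suc n) * max s 0\<rceil> s)
        \<in> borel_measurable borel"
      by (rule measurable_compose_countable) measurable
    then show ?thesis by (simp add: r_def)
  qed
  fix s :: real
  define x where "x = max s 0"
  have cont: "continuous (at x within {x..}) g"
    using assms by (simp add: cadlag_def x_def at_within_Ici_at_right)
  have lo: "x \<le> r n x" for n
    using le_of_int_ceiling[of "real (Suc n) * x"] by (simp add: r_def field_simps)
  have up: "r n x \<le> x + 1 / real (Suc n)" for n
  proof -
    have "real_of_int \<lceil>real (Suc n) * x\<rceil> \<le> real (Suc n) * x + 1"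
      using ceiling_correct[of "real (Suc n) * x"] by linarith
    then have "r n x \<le> (real (Suc n) * x + 1) / real (Suc n)"
      unfolding r_def by (intro divide_right_mono) auto
    also have "\<dots> = x + 1 / real (Suc n)" by (simp add: field_simps)
    finally show ?thesis .
  qed
  have lim_up: "(\<lambda>n. x + 1 / real (Suc n)) \<longlonglongrightarrow> x"
    using tendsto_add[OF tendsto_const LIMSEQ_inverse_real_of_nat, of x] by (simp add: inverse_eq_divide)
  have "eventually (\<lambda>n. x \<le> r n x) sequentially"
    and "eventually (\<lambda>n. r n x \<le> x + 1 / real (Suc n)) sequentially"
    using lo up by (auto intro: always_eventually)
  from real_tendsto_sandwich[OF this tendsto_const lim_up]
  have lim_r: "(\<lambda>n. r n x) \<longlonglongrightarrow> x" .
  have "(\<lambda>n. g (r n x)) \<longlonglongrightarrow> g x"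
    using continuous_within_tendsto_compose'[OF cont _ lim_r] lo by simp
  then show "(\<lambda>n. g (r n (max s 0))) \<longlonglongrightarrow> g (max s 0)" by (simp add: x_def)
qed

lemma leftlim_measurable:
  assumes cg: "cadlag g"
  shows "leftlim g \<in> borel_measurable borel"
proof (rule borel_measurable_LIMSEQ_real)
  define w where "w n s = (if s \<le> 0 then g 0 else g (max (s - 1 / real (Suc n)) 0))" for n s
  have m0: "(\<lambda>s. g (max s 0)) \<in> borel_measurable borel" by (rule cadlag_measurable[OF cg])
  show "w n \<in> borel_measurable borel" for n
  proof -
    have "(\<lambda>s. g (max (s - 1 / real (Suc n)) 0)) \<in> borel_measurable borel"
      using measurable_compose[OF _ m0, of "\<lambda>s. s - 1 / real (Suc n)" borel] by simp
    then show ?thesis unfolding w_def by measurable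
  qed
  fix s :: real
  show "(\<lambda>n. w n s) \<longlonglongrightarrow> leftlim g s"
  proof (cases "s \<le> 0")
    case True
    then show ?thesis by (simp add: w_def leftlim_def)
  next
    case False
    then have "0 < s" by simp
    then obtain l where l: "(g \<longlongrightarrow> l) (at_left s)" using cg by (auto simp: cadlag_def)
    have "(\<lambda>n. s - 1 / real (Suc n)) \<longlonglongrightarrow> s"
      using tendsto_diff[OF tendsto_const LIMSEQ_inverse_real_of_nat, of s]
      by (simp add: inverse_eq_divide)
    moreover have "eventually (\<lambda>n. s - 1 / real (Suc n) < s) sequentially" by simp
    ultimately have "filterlim (\<lambda>n. s - 1 / real (Suc n)) (at_left s) sequentially"
      by (simp add: filterlim_at eventually_mono)
    then have "(\<lambda>n. g (s - 1 / real (Suc n))) \<longlonglongrightarrow> l" using l by (rule filterlim_compose[rotated])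
    moreover have "eventually (\<lambda>n. 0 < s - 1 / real (Suc n)) sequentially"
      using \<open>(\<lambda>n. s - 1 / real (Suc n)) \<longlonglongrightarrow> s\<close> False by (intro order_tendstoD) auto
    then have "eventually (\<lambda>n. g (s - 1 / real (Suc n)) = w n s) sequentially"
      using False by (auto simp: w_def elim: eventually_mono)
    ultimately show ?thesis
      using False l by (simp add: leftlim_def tendsto_Lim Lim_transform_eventually)
  qed
qed

lemma ownJ_eq:
  "ownJ \<psi> f g t Q = (\<integral>\<^sup>+ x. indicator ({0..t} \<times> {0..} \<times> {0..}) x
      * (ennreal (\<psi> (leftlim g (fst x))) * indicator {x. fst (snd x) \<le> f (leftlim g (fst x))} x) \<partial>Q)"
  unfolding ownJ_def by (intro nn_integral_cong) (auto simp: indicator_def split: prod.split)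

lemma crossJ_eq:
  "crossJ f g t Q = (\<integral>\<^sup>+ x. indicator ({0..t} \<times> {0..} \<times> {0..}) x
      * (ennreal (snd (snd x)) * indicator {x. fst (snd x) \<le> f (leftlim g (fst x))} x) \<partial>Q)"
  unfolding crossJ_def by (intro nn_integral_cong) (auto simp: indicator_def split: prod.split)

lemma ownJ_mono: "s \<le> t \<Longrightarrow> ownJ \<psi> f g s Q \<le> ownJ \<psi> f g t Q"
  unfolding ownJ_def by (intro nn_integral_mono) (auto simp: indicator_def split: prod.split)

lemma crossJ_mono: "s \<le> t \<Longrightarrow> crossJ f g s Q \<le> crossJ f g t Q"
  unfolding crossJ_def by (intro nn_integral_mono) (auto simp: indicator_def split: prod.split)

lemma nn_integral_time_split:
  fixes Q :: "(real \<times> real \<times> real) measure"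
  assumes sQ: "sets Q = sets (borel \<Otimes>\<^sub>M (borel \<Otimes>\<^sub>M borel))"
    and G: "G \<in> borel_measurable Q" and st: "0 \<le> s" "s \<le> t"
  shows "(\<integral>\<^sup>+ x. indicator ({0..t} \<times> {0..} \<times> {0..}) x * G x \<partial>Q)
       = (\<integral>\<^sup>+ x. indicator ({0..s} \<times> {0..} \<times> {0..}) x * G x \<partial>Q)
       + (\<integral>\<^sup>+ x. indicator ({s<..t} \<times> {0..} \<times> {0..}) x * G x \<partial>Q)"
proof -
  have [measurable]: "G \<in> borel_measurable Q"
    "{0..s} \<times> {0..} \<times> {0..} \<in> sets Q" "{s<..t} \<times> {0..} \<times> {0..} \<in> sets Q"
    using G unfolding sQ by measurable
  have "(\<integral>\<^sup>+ x. indicator ({0..t} \<times> {0..} \<times> {0..}) x * G x \<partial>Q)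
      = (\<integral>\<^sup>+ x. indicator ({0..s} \<times> {0..} \<times> {0..}) x * G x
                + indicator ({s<..t} \<times> {0..} \<times> {0..}) x * G x \<partial>Q)"
    using st by (intro nn_integral_cong) (auto simp: indicator_def)
  also have "\<dots> = (\<integral>\<^sup>+ x. indicator ({0..s} \<times> {0..} \<times> {0..}) x * G x \<partial>Q)
       + (\<integral>\<^sup>+ x. indicator ({s<..t} \<times> {0..} \<times> {0..}) x * G x \<partial>Q)"
    by (intro nn_integral_add) measurable
  finally show ?thesis .
qed

lemma ownJ_increment_le:
  fixes Q :: "(real \<times> real \<times> real) measure"
  assumes sQ: "sets Q = sets (borel \<Otimes>\<^sub>M (borel \<Otimes>\<^sub>M borel))"
    and [measurable]: "leftlim g \<in> borel_measurable borel"
      "f \<in> borel_measurable borel" "\<psi> \<in> borel_measurable borel"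
    and F: "\<forall>x. f x \<le> F" and P: "\<forall>x. \<psi> x \<le> P" and st: "0 \<le> s" "s \<le> t"
  shows "ownJ \<psi> f g t Q \<le> ownJ \<psi> f g s Q + ennreal P * emeasure Q ({s<..t} \<times> {0..F} \<times> {0..})"
proof -
  define G where "G x = ennreal (\<psi> (leftlim g (fst x))) * indicator {x. fst (snd x) \<le> f (leftlim g (fst x))} x"
    for x :: "real \<times> real \<times> real"
  have "G \<in> borel_measurable Q" unfolding G_def measurable_cong_sets[OF sQ refl] by measurable
  then have "ownJ \<psi> f g t Q = ownJ \<psi> f g s Q + (\<integral>\<^sup>+ x. indicator ({s<..t} \<times> {0..} \<times> {0..}) x * G x \<partial>Q)"
    unfolding ownJ_eq G_def[symmetric] using nn_integral_time_split[OF sQ _ st] by simp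
  also have "(\<integral>\<^sup>+ x. indicator ({s<..t} \<times> {0..} \<times> {0..}) x * G x \<partial>Q)
      \<le> (\<integral>\<^sup>+ x. ennreal P * indicator ({s<..t} \<times> {0..F} \<times> {0..}) x \<partial>Q)"
    using P by (intro nn_integral_mono)
      (auto simp: G_def indicator_def ennreal_leI intro: order_trans[OF _ F[rule_format]])
  also have "\<dots> = ennreal P * emeasure Q ({s<..t} \<times> {0..F} \<times> {0..})"
    by (rule nn_integral_cmult_indicator) (simp add: sQ)
  finally show ?thesis by (simp add: add_left_mono)
qed

lemma crossJ_increment_le:
  fixes Q :: "(real \<times> real \<times> real) measure"
  assumes sQ: "sets Q = sets (borel \<Otimes>\<^sub>M (borel \<Otimes>\<^sub>M borel))"
    and [measurable]: "leftlim g \<in> borel_measurable borel" "f \<in> borel_measurable borel"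
    and F: "\<forall>x. f x \<le> F" and st: "0 \<le> s" "s \<le> t"
  shows "crossJ f g t Q \<le> crossJ f g s Q
      + (\<integral>\<^sup>+ x. ennreal (snd (snd x)) * indicator ({s<..t} \<times> {0..F} \<times> {0..}) x \<partial>Q)"
proof -
  define G where "G x = ennreal (snd (snd x)) * indicator {x. fst (snd x) \<le> f (leftlim g (fst x))} x"
    for x :: "real \<times> real \<times> real"
  have "G \<in> borel_measurable Q" unfolding G_def measurable_cong_sets[OF sQ refl] by measurable
  then have "crossJ f g t Q = crossJ f g s Q + (\<integral>\<^sup>+ x. indicator ({s<..t} \<times> {0..} \<times> {0..}) x * G x \<partial>Q)"
    unfolding crossJ_eq G_def[symmetric] using nn_integral_time_split[OF sQ _ st] by simp
  also have "(\<integral>\<^sup>+ x. indicator ({s<..t} \<times> {0..} \<times> {0..}) x * G x \<partial>Q)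
      \<le> (\<integral>\<^sup>+ x. ennreal (snd (snd x)) * indicator ({s<..t} \<times> {0..F} \<times> {0..}) x \<partial>Q)"
    by (intro nn_integral_mono) (auto simp: G_def indicator_def intro: order_trans[OF _ F[rule_format]])
  finally show ?thesis by (simp add: add_left_mono)
qed

lemma enn2real_increment_le:
  fixes x y z :: ennreal
  assumes "x \<le> y + z" "y \<le> x" "x < \<top>"
  shows "0 \<le> enn2real x - enn2real y" "ennreal (enn2real x - enn2real y) \<le> z"
proof -
  obtain u v where uv: "x = ennreal u" "y = ennreal v" "0 \<le> u" "0 \<le> v"
    using assms by (cases x; cases y) (auto simp: top_unique)
  then show "0 \<le> enn2real x - enn2real y" using assms(2) by simp
  show "ennreal (enn2real x - enn2real y) \<le> z"
  proof (cases z)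
    case (real w)
    then have "u \<le> v + w" using assms(1) uv by (simp flip: ennreal_plus)
    then show ?thesis using uv real by (simp add: ennreal_leI)
  qed simp
qed

lemma ennreal_le_suminf: "(f k :: ennreal) \<le> (\<Sum>i. f i)"
  using sum_le_suminf[of f "{k}"] by simp

lemma dyadic_shell_cover:
  fixes R c :: real
  assumes R: "0 < R" and c: "0 \<le> c"
  shows "ennreal c \<le> (\<Sum>k. ennreal (R / 2 ^ k) * indicator {R / 2 ^ Suc k<..R / 2 ^ k} c)
                    + (\<Sum>k. ennreal (2 ^ Suc k * R) * indicator {2 ^ k * R<..2 ^ Suc k * R} c)"
proof (cases "c = 0")
  case False
  then have c0: "0 < c" using c by simp
  show ?thesis
  proof (cases "c \<le> R")
    case True
    obtain n where "R / c < 2 ^ n" using real_arch_pow[of 2 "R / c"] by auto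
    then have "R / 2 ^ n < c" using c0 by (simp add: field_simps)
    then obtain k where k: "\<not> R / 2 ^ k < c" "R / 2 ^ Suc k < c"
      using ex_least_nat_less[of "\<lambda>n. R / 2 ^ n < c" n] True by auto
    have "ennreal c \<le> ennreal (R / 2 ^ k) * indicator {R / 2 ^ Suc k<..R / 2 ^ k} c"
      using k by (auto simp: indicator_def ennreal_leI)
    also have "\<dots> \<le> (\<Sum>k. ennreal (R / 2 ^ k) * indicator {R / 2 ^ Suc k<..R / 2 ^ k} c)"
      by (rule ennreal_le_suminf)
    finally show ?thesis by (rule order_trans) simp
  next
    case False
    obtain n where "c / R < 2 ^ n" using real_arch_pow[of 2 "c / R"] by auto
    then have "c \<le> 2 ^ n * R" using R by (simp add: field_simps)
    then obtain k where k: "\<not> c \<le> 2 ^ k * R" "c \<le> 2 ^ Suc k * R"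
      using ex_least_nat_less[of "\<lambda>n. c \<le> 2 ^ n * R" n] False by auto
    have "ennreal c \<le> ennreal (2 ^ Suc k * R) * indicator {2 ^ k * R<..2 ^ Suc k * R} c"
      using k by (auto simp: indicator_def ennreal_leI)
    also have "\<dots> \<le> (\<Sum>k. ennreal (2 ^ Suc k * R) * indicator {2 ^ k * R<..2 ^ Suc k * R} c)"
      by (rule ennreal_le_suminf)
    finally show ?thesis by (rule order_trans) simp
  qed
qed simp

lemma nn_integral_mark_le_dyadic_shells:
  fixes Q :: "(real \<times> real \<times> real) measure"
  assumes sQ: "sets Q = sets (borel \<Otimes>\<^sub>M (borel \<Otimes>\<^sub>M borel))"
    and AB: "A \<in> sets borel" "B \<in> sets borel" and R: "0 < R"
  shows "(\<integral>\<^sup>+ x. ennreal (snd (snd x)) * indicator (A \<times> B \<times> {0..}) x \<partial>Q)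
     \<le> (\<Sum>k. ennreal (R / 2 ^ k) * emeasure Q (A \<times> B \<times> {R / 2 ^ Suc k<..R / 2 ^ k}))
      + (\<Sum>k. ennreal (2 ^ Suc k * R) * emeasure Q (A \<times> B \<times> {2 ^ k * R<..2 ^ Suc k * R}))"
proof -
  define S where "S k = A \<times> B \<times> {R / 2 ^ Suc k<..R / 2 ^ k}" for k :: nat
  define L where "L k = A \<times> B \<times> {2 ^ k * R<..2 ^ Suc k * R}" for k :: nat
  have [measurable]: "S k \<in> sets Q" "L k \<in> sets Q" for k
    unfolding sQ S_def L_def using AB by measurable
  have "(\<integral>\<^sup>+ x. ennreal (snd (snd x)) * indicator (A \<times> B \<times> {0..}) x \<partial>Q)
      \<le> (\<integral>\<^sup>+ x. (\<Sum>k. ennreal (R / 2 ^ k) * indicator (S k) x)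
                + (\<Sum>k. ennreal (2 ^ Suc k * R) * indicator (L k) x) \<partial>Q)"
  proof (rule nn_integral_mono)
    fix x :: "real \<times> real \<times> real"
    obtain v w u where x: "x = (v, w, u)" by (cases x)
    show "ennreal (snd (snd x)) * indicator (A \<times> B \<times> {0..}) x
        \<le> (\<Sum>k. ennreal (R / 2 ^ k) * indicator (S k) x)
          + (\<Sum>k. ennreal (2 ^ Suc k * R) * indicator (L k) x)"
      using dyadic_shell_cover[OF R, of u]
      by (cases "v \<in> A \<and> w \<in> B \<and> 0 \<le> u") (auto simp: x S_def L_def indicator_def)
  qed
  also have "\<dots> = (\<Sum>k. ennreal (R / 2 ^ k) * emeasure Q (S k))
                + (\<Sum>k. ennreal (2 ^ Suc k * R) * emeasure Q (L k))"
    by (simp add: nn_integral_add nn_integral_suminf nn_integral_cmult_indicator)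
  finally show ?thesis unfolding S_def L_def .
qed

lemma sums_dyadic_small_shells:
  fixes R \<alpha> c :: real
  assumes R: "0 < R" and \<alpha>: "\<alpha> < 1" and c: "0 \<le> c"
  shows "(\<Sum>k. ennreal (R / 2 ^ k) * ennreal (c * (R / 2 ^ Suc k) powr (- \<alpha>)))
       = ennreal (c * R powr (1 - \<alpha>) * (2 powr \<alpha> / (1 - 2 powr (\<alpha> - 1))))"
proof -
  have summand: "R / 2 ^ k * (c * (R / 2 ^ Suc k) powr (- \<alpha>))
      = c * R powr (1 - \<alpha>) * 2 powr \<alpha> * (2 powr (\<alpha> - 1)) ^ k" for k
    using R by (simp add: powr_realpow[symmetric] powr_divide powr_powr powr_diff powr_add powr_minus
        powr_mult field_simps)
  have "(\<lambda>k. c * R powr (1 - \<alpha>) * 2 powr \<alpha> * (2 powr (\<alpha> - 1)) ^ k)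
      sums (c * R powr (1 - \<alpha>) * 2 powr \<alpha> * (1 / (1 - 2 powr (\<alpha> - 1))))"
    using \<alpha> by (intro sums_mult geometric_sums) (simp add: powr_less_one)
  then show ?thesis
    using R c unfolding summand[symmetric]
    by (subst suminf_ennreal_eq[symmetric]) (auto simp: ennreal_mult'[symmetric])
qed

lemma sums_dyadic_large_shells:
  fixes R \<alpha> q c :: real
  assumes R: "0 < R" and q: "q < \<alpha>" and c: "0 \<le> c"
  shows "(\<Sum>k. ennreal ((2 ^ Suc k * R) powr q) * ennreal (c * (2 ^ k * R) powr (- \<alpha>)))
       = ennreal (c * R powr (q - \<alpha>) * (2 powr q / (1 - 2 powr (q - \<alpha>))))"
proof -
  have summand: "(2 ^ Suc k * R) powr q * (c * (2 ^ k * R) powr (- \<alpha>))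
      = c * R powr (q - \<alpha>) * 2 powr q * (2 powr (q - \<alpha>)) ^ k" for k
    using R by (simp add: powr_realpow[symmetric] powr_divide powr_powr powr_diff powr_add powr_minus
        powr_mult field_simps)
  have "(\<lambda>k. c * R powr (q - \<alpha>) * 2 powr q * (2 powr (q - \<alpha>)) ^ k)
      sums (c * R powr (q - \<alpha>) * 2 powr q * (1 / (1 - 2 powr (q - \<alpha>))))"
    using q by (intro sums_mult geometric_sums) (simp add: powr_less_one)
  then show ?thesis
    using R c unfolding summand[symmetric]
    by (subst suminf_ennreal_eq[symmetric]) (auto simp: ennreal_mult'[symmetric])
qed

section \<open>Positivity of the particles\<close>

lemma set_integral_Icc_split:
  fixes \<beta> :: "real \<Rightarrow> real"
  assumes "set_integrable lborel {0..t} \<beta>" "0 \<le> s" "s \<le> t"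
  shows "(LINT r:{0..t}|lborel. \<beta> r) = (LINT r:{0..s}|lborel. \<beta> r) + (LINT r:{s<..t}|lborel. \<beta> r)"
proof -
  have "{0..t} = {0..s} \<union> {s<..t}" "{0..s} \<inter> {s<..t} = {}" using assms by auto
  moreover have "set_integrable lborel {0..s} \<beta>" "set_integrable lborel {s<..t} \<beta>"
    using assms by (auto intro: set_integrable_subset)
  ultimately show ?thesis using set_integral_Un by metis
qed

lemma set_integral_increment_ge:
  fixes \<beta> :: "real \<Rightarrow> real"
  assumes int: "set_integrable lborel {0..t} \<beta>" and st: "0 \<le> s" "s \<le> t"
    and bound: "\<And>r. s < r \<Longrightarrow> r < t \<Longrightarrow> c \<le> \<beta> r"
  shows "c * (t - s) \<le> (LINT r:{0..t}|lborel. \<beta> r) - (LINT r:{0..s}|lborel. \<beta> r)"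
proof -
  have i: "set_integrable lborel {s<..t} \<beta>" using int st by (auto intro: set_integrable_subset)
  have ic: "set_integrable lborel {s<..t} (\<lambda>_. c)"
    using st by (simp add: set_integrable_def integrable_real_indicator)
  have "AE r \<in> {s<..t} in lborel. c \<le> \<beta> r"
    using AE_lborel_singleton[of t] by eventually_elim (auto intro: bound)
  then have "(LINT r:{s<..t}|lborel. c) \<le> (LINT r:{s<..t}|lborel. \<beta> r)"
    by (rule set_integral_mono_AE[OF ic i])
  then show ?thesis using set_integral_Icc_split[OF int st] st by (simp add: set_integral_const mult.commute)
qed

lemma set_integral_increment_abs_le:
  fixes \<beta> :: "real \<Rightarrow> real"
  assumes int: "set_integrable lborel {0..t} \<beta>" and st: "0 \<le> s" "s \<le> t"
    and bound: "\<And>r. s < r \<Longrightarrow> r < t \<Longrightarrow> \<bar>\<beta> r\<bar> \<le> B"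
  shows "\<bar>(LINT r:{0..t}|lborel. \<beta> r) - (LINT r:{0..s}|lborel. \<beta> r)\<bar> \<le> B * (t - s)"
proof -
  have "- B * (t - s) \<le> (LINT r:{0..t}|lborel. \<beta> r) - (LINT r:{0..s}|lborel. \<beta> r)"
    using bound by (intro set_integral_increment_ge[OF int st]) (force simp: abs_le_iff)
  moreover have "- B * (t - s) \<le> (LINT r:{0..t}|lborel. - \<beta> r) - (LINT r:{0..s}|lborel. - \<beta> r)"
    using int bound by (intro set_integral_increment_ge[OF _ st])
      (force simp: abs_le_iff set_integrable_def)+
  moreover have "set_integrable lborel {0..s} \<beta>" using int st by (auto intro: set_integrable_subset)
  ultimately show ?thesis using int by (simp add: set_integral_uminus abs_le_iff)
qed

lemma first_nonpositive_time:
  fixes g :: "real \<Rightarrow> real"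
  assumes cg: "cadlag g" and g0: "0 < g 0" and t0: "0 \<le> t0" "g t0 \<le> 0"
  obtains \<tau> where "0 < \<tau>" "g \<tau> \<le> 0" "\<And>r. 0 \<le> r \<Longrightarrow> r < \<tau> \<Longrightarrow> 0 < g r"
proof -
  define S where "S = {t. 0 \<le> t \<and> g t \<le> 0}"
  define \<tau> where "\<tau> = Inf S"
  have S: "S \<noteq> {}" "bdd_below S" using t0 by (auto simp: S_def bdd_below_def)
  have tau0: "0 \<le> \<tau>" unfolding \<tau>_def using S by (intro cInf_greatest) (auto simp: S_def)
  have before: "0 < g r" if "0 \<le> r" "r < \<tau>" for r
    using cInf_lower[OF _ S(2), of r] that by (force simp: S_def \<tau>_def)
  have "g \<tau> \<le> 0"
  proof (rule ccontr)
    assume "\<not> g \<tau> \<le> 0"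
    \<comment> \<open>By right-continuity \<open>g\<close> would stay positive on some \<open>[\<tau>, b)\<close>, so \<open>b \<le> Inf S = \<tau>\<close>.\<close>
    then have "eventually (\<lambda>y. 0 < g y) (at_right \<tau>)"
      using cg tau0 by (intro order_tendstoD) (auto simp: cadlag_def continuous_within)
    then obtain b where b: "\<tau> < b" "\<And>y. \<tau> < y \<Longrightarrow> y < b \<Longrightarrow> 0 < g y"
      by (auto simp: eventually_at_right_field)
    have "b \<le> \<tau>" unfolding \<tau>_def using S(1)
    proof (rule cInf_greatest)
      fix x assume "x \<in> S"
      then show "b \<le> x" using before[of x] b(2)[of x] \<open>\<not> g \<tau> \<le> 0\<close>
        by (cases "x = \<tau>") (force simp: S_def)+
    qed
    then show False using b by simp
  qed
  moreover have "0 < \<tau>" using tau0 \<open>g \<tau> \<le> 0\<close> g0 by (cases "\<tau> = 0") auto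
  ultimately show thesis using that before by blast
qed

lemma integral_equation_decrease_le:
  fixes g \<beta> J :: "real \<Rightarrow> real"
  assumes eq: "\<And>t. 0 \<le> t \<Longrightarrow> g t = x0 + (LINT s:{0..t}|lborel. \<beta> s) + J t"
    and int: "set_integrable lborel {0..\<tau>} \<beta>"
    and J_mono: "J r \<le> J \<tau>" and lower: "\<And>u. r < u \<Longrightarrow> u < \<tau> \<Longrightarrow> - C \<le> \<beta> u"
    and r: "0 \<le> r" "r \<le> \<tau>"
  shows "g r \<le> g \<tau> + C * (\<tau> - r)"
proof -
  have "- C * (\<tau> - r) \<le> (LINT s:{0..\<tau>}|lborel. \<beta> s) - (LINT s:{0..r}|lborel. \<beta> s)"
    using lower by (intro set_integral_increment_ge[OF int r])
  then show ?thesis using eq[of r] eq[of \<tau>] J_mono r by simp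
qed

lemma path_stays_positive:
  fixes g \<beta> J :: "real \<Rightarrow> real" and x0 K :: real
  assumes cg: "cadlag g" and x0: "0 < x0" and K: "0 \<le> K"
    and eq: "\<And>t. 0 \<le> t \<Longrightarrow> g t = x0 + (LINT s:{0..t}|lborel. \<beta> s) + J t"
    and int: "\<And>t. 0 \<le> t \<Longrightarrow> set_integrable lborel {0..t} \<beta>"
    and J_mono: "\<And>s t. 0 \<le> s \<Longrightarrow> s \<le> t \<Longrightarrow> J s \<le> J t" and J0: "0 \<le> J 0"
    and lower: "\<And>s. 0 \<le> s \<Longrightarrow> 0 < g s \<Longrightarrow> - (K * g s) \<le> \<beta> s"
    and t: "0 \<le> t"
  shows "0 < g t"
proof (rule ccontr)
  assume "\<not> 0 < g t"
  moreover have "0 < g 0"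
  proof -
    have "AE s in lborel. indicator {0..0::real} s *\<^sub>R \<beta> s = 0"
      using AE_lborel_singleton[of 0] by eventually_elim (auto simp: indicator_def)
    then have "(LINT s:{0..0}|lborel. \<beta> s) = 0"
      unfolding set_lebesgue_integral_def by (rule integral_eq_zero_AE)
    then show ?thesis using eq[of 0] J0 x0 by simp
  qed
  ultimately obtain \<tau> where \<tau>: "0 < \<tau>" "g \<tau> \<le> 0" and before: "\<And>r. 0 \<le> r \<Longrightarrow> r < \<tau> \<Longrightarrow> 0 < g r"
    using first_nonpositive_time[OF cg _ t] by (metis not_less)
  \<comment> \<open>The left limit at \<open>\<tau>\<close> bounds \<open>g\<close> on a window \<open>[r0, \<tau>)\<close> so short that \<open>K (\<tau> - r0) \<le> 1/2\<close>;
     the drift cannot then bring the supremum \<open>m\<close> of \<open>g\<close> over the window down to \<open>g \<tau> \<le> 0\<close>.\<close>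
  obtain l where "(g \<longlongrightarrow> l) (at_left \<tau>)" using cg \<tau>(1) by (auto simp: cadlag_def)
  then have "eventually (\<lambda>y. g y < l + 1) (at_left \<tau>)" by (rule order_tendstoD) simp
  then obtain c where c: "c < \<tau>" "\<And>y. c < y \<Longrightarrow> y < \<tau> \<Longrightarrow> g y < l + 1"
    by (auto simp: eventually_at_left_field)
  define r0 where "r0 = max (max c 0) (\<tau> - 1 / (2 * (K + 1)))"
  have r0: "0 \<le> r0" "r0 < \<tau>" "c \<le> r0" using c \<tau> K by (auto simp: r0_def)
  have short: "K * (\<tau> - r0) \<le> 1 / 2"
  proof -
    have "K * (\<tau> - r0) \<le> K * (1 / (2 * (K + 1)))" using K by (intro mult_left_mono) (auto simp: r0_def)
    also have "\<dots> \<le> 1 / 2" using K by (simp add: field_simps)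
    finally show ?thesis .
  qed
  define m where "m = Sup (g ` {r0..<\<tau>})"
  have "bdd_above (g ` {r0..<\<tau>})"
    using c(2) r0 by (intro bdd_aboveI[of _ "max (l + 1) (g r0)"]) (force simp: le_less)
  then have g_le_m: "g y \<le> m" if "y \<in> {r0..<\<tau>}" for y
    unfolding m_def using that by (intro cSup_upper) auto
  have m: "0 < m" using g_le_m[of r0] before[of r0] r0 by auto
  have "g r \<le> m / 2" if r: "r \<in> {r0..<\<tau>}" for r
  proof -
    have "g r \<le> g \<tau> + K * m * (\<tau> - r)"
    proof (rule integral_equation_decrease_le[OF eq int])
      fix s assume s: "r < s" "s < \<tau>"
      then have "0 \<le> s" "0 < g s" "g s \<le> m" using before[of s] g_le_m[of s] r r0 by auto
      then have "- (K * m) \<le> - (K * g s)" using K by (simp add: mult_left_mono)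
      also have "\<dots> \<le> \<beta> s" using lower \<open>0 \<le> s\<close> \<open>0 < g s\<close> .
      finally show "- (K * m) \<le> \<beta> s" .
    qed (use J_mono r r0 \<tau> in auto)
    also have "\<dots> \<le> K * m * (\<tau> - r0)"
      using \<tau>(2) r m K mult_left_mono[of "\<tau> - r" "\<tau> - r0" "K * m"] by simp
    also have "\<dots> = m * (K * (\<tau> - r0))" by simp
    also have "\<dots> \<le> m * (1 / 2)" using short m by (intro mult_left_mono) auto
    finally show ?thesis by simp
  qed
  then have "m \<le> m / 2" unfolding m_def using r0 by (intro cSup_least) (auto simp: m_def)
  then show False using m by simp
qed

lemma AE_pos_of_distr:
  assumes "Y \<in> borel_measurable M" "distr M borel Y = \<mu>" "emeasure \<mu> {..<0} = 0" "emeasure \<mu> {0} = 0"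
    "sets \<mu> = sets (borel :: real measure)"
  shows "AE \<omega> in M. 0 < Y \<omega>"
proof -
  have "emeasure M (Y -` {..0} \<inter> space M) = emeasure \<mu> {..0}"
    using assms(1,2) emeasure_distr[OF assms(1), of "{..0}"] by simp
  also have "\<dots> \<le> emeasure \<mu> {..<0} + emeasure \<mu> {0}"
    using emeasure_subadditive[of "{..<0}" \<mu> "{0}"] assms(5) by (simp add: ivl_disj_un_singleton(2)[symmetric])
  finally have "emeasure M (Y -` {..0} \<inter> space M) = 0" using assms(3,4) by simp
  then show ?thesis
    using assms(1) by (subst AE_iff_measurable[of "Y -` {..0} \<inter> space M"]) (auto simp: not_less)
qed

section \<open>The particle system\<close>

locale stable_particle_system =
  fixes \<alpha> q c :: real and \<nu> :: "real measure"
    and a f \<psi> h :: "real \<Rightarrow> real" and b :: "real \<Rightarrow> real measure \<Rightarrow> real"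
    and M :: "'a measure" and \<pi> :: "nat \<Rightarrow> 'a \<Rightarrow> (real \<times> real \<times> real) measure"
    and X0 :: "nat \<Rightarrow> 'a \<Rightarrow> real" and X :: "nat \<Rightarrow> nat \<Rightarrow> real \<Rightarrow> 'a \<Rightarrow> real"
    and F P B Cb La Ch :: real
  assumes alpha: "0 < \<alpha>" "\<alpha> < 1" and q: "0 < q" "q < \<alpha>"
    and nu: "prob_space \<nu>" "sets \<nu> = sets (borel :: real measure)" "emeasure \<nu> {..<0} = 0"
       "\<forall>l\<ge>0. (\<integral>y. exp (- l * y) \<partial>\<nu>) = exp (- (l powr \<alpha>))"
    and a0: "a 0 = 0" and a_concave: "concave_on {0..} a" and a_mono: "strict_mono a"
    and a_lip: "\<forall>x y. \<bar>a x - a y\<bar> \<le> La * \<bar>x - y\<bar>" and La_nonneg: "0 \<le> La"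
    and a_tail: "\<forall>x\<ge>1. a x = c + x powr q"
    and b_bound: "\<forall>x\<ge>0. \<forall>\<mu>\<in>P1_meas. \<bar>b x \<mu>\<bar> \<le> B"
    and b_0: "\<forall>\<mu>\<in>P1_meas. b 0 \<mu> \<ge> 0"
    and b_lip: "\<forall>x\<ge>0. \<forall>x'\<ge>0. \<forall>\<mu>\<in>P1_meas. \<forall>\<mu>'\<in>P1_meas.
                 ennreal \<bar>b x \<mu> - b x' \<mu>'\<bar> \<le> ennreal Cb * (ennreal \<bar>a x - a x'\<bar> + Wa a \<mu> \<mu>')"
    and f_meas: "f \<in> borel_measurable borel" and f_le: "\<forall>x. f x \<le> F" and F_nonneg: "0 \<le> F"
    and psi_meas: "\<psi> \<in> borel_measurable borel"
    and psi_nonneg: "\<forall>x. 0 \<le> \<psi> x" and psi_le: "\<forall>x. \<psi> x \<le> P"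
    and h_lip: "\<forall>x y. \<bar>h x - h y\<bar> \<le> Ch * \<bar>a x - a y\<bar>" and Ch_nonneg: "0 \<le> Ch"
    and M: "prob_space M"
    and prm: "\<forall>i\<ge>1. poisson_random_measure M (intensity \<nu>) (\<pi> i)"
    and X0_pos: "\<forall>i\<ge>1. AE \<omega> in M. 0 < X0 i \<omega>"
    and sol: "\<forall>N\<ge>1. particle_solution M b f \<psi> \<alpha> \<pi> X0 N (X N)"
begin

lemma B_nonneg: "0 \<le> B"
  using b_bound empirical_in_P1_meas[of 1 "\<lambda>_. 0"] by fastforce

lemma q_le_1: "q \<le> 1"
  using q alpha by simp

lemma P_nonneg: "0 \<le> P"
  using psi_nonneg psi_le by (meson order_trans)

definition gauge_const :: real where
  "gauge_const = La + \<bar>c\<bar> + 1"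

lemma gauge_increment_le:
  assumes "\<bar>D\<bar> \<le> u + v + w" "0 \<le> u" "0 \<le> v" "0 \<le> w"
  shows "a \<bar>D\<bar> \<le> La * u + La * v + gauge_const * w powr q"
proof -
  have mono: "mono a" using a_mono by (rule strict_mono_mono)
  have sub: "a (x + y) \<le> a x + a y" if "0 \<le> x" "0 \<le> y" for x y
    by (rule concave_on_subadditive[OF a_concave a0 that])
  have lin: "a x \<le> La * x" if "0 \<le> x" for x using a_lip[rule_format, of x 0] a0 that by simp
  have "a \<bar>D\<bar> \<le> a (u + v + w)" using assms(1) by (rule monoD[OF mono])
  also have "\<dots> \<le> a u + a v + a w" using sub assms(2-4) by (smt (verit) add_nonneg_nonneg)
  also have "\<dots> \<le> La * u + La * v + gauge_const * w powr q"
    using lin[of u] lin[of v] assms le_powr_of_lipschitz_tail[OF a_lip a0 a_tail q(1) q_le_1 assms(4)] La_nonneg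
    by (simp add: gauge_const_def)
  finally show ?thesis .
qed

lemma h_increment_le:
  assumes "0 \<le> x" "0 \<le> y"
  shows "\<bar>h x - h y\<bar> \<le> Ch * a \<bar>x - y\<bar>"
  using h_lip[rule_format, of x y] mult_left_mono[OF abs_diff_le_of_concave[OF a_concave a0
      strict_mono_mono[OF a_mono] assms] Ch_nonneg] by simp

definition path :: "nat \<Rightarrow> nat \<Rightarrow> 'a \<Rightarrow> real \<Rightarrow> real" where
  "path N j \<omega> = (\<lambda>r. X N j r \<omega>)"

definition drift :: "nat \<Rightarrow> nat \<Rightarrow> 'a \<Rightarrow> real \<Rightarrow> real" where
  "drift N j \<omega> = (\<lambda>r. b (X N j r \<omega>) (empirical N (\<lambda>k. X N k r \<omega>)))"

definition jump_part :: "nat \<Rightarrow> nat \<Rightarrow> 'a \<Rightarrow> real \<Rightarrow> real" where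
  "jump_part N j \<omega> r = enn2real (ownJ \<psi> f (path N j \<omega>) r (\<pi> j \<omega>))
     + real N powr (- 1 / \<alpha>) * (\<Sum>k\<in>{1..N} - {j}. enn2real (crossJ f (path N k \<omega>) r (\<pi> k \<omega>)))"

lemma solution_AE:
  assumes "1 \<le> N"
  shows "AE \<omega> in M. \<forall>j\<in>{1..N}. cadlag (path N j \<omega>) \<and> (\<forall>r\<ge>0.
      set_integrable lborel {0..r} (drift N j \<omega>) \<and> ownJ \<psi> f (path N j \<omega>) r (\<pi> j \<omega>) < \<infinity> \<and>
      (\<forall>k\<in>{1..N}. crossJ f (path N k \<omega>) r (\<pi> k \<omega>) < \<infinity>) \<and>
      X N j r \<omega> = X0 j \<omega> + (LINT u:{0..r}|lborel. drift N j \<omega> u) + jump_part N j \<omega> r)"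
proof -
  have "particle_solution M b f \<psi> \<alpha> \<pi> X0 N (X N)" using sol assms by simp
  then show ?thesis
    unfolding particle_solution_def path_def drift_def jump_part_def by (simp add: add.assoc)
qed

lemma jump_part_mono:
  assumes "0 \<le> r" "r \<le> r'" and fin: "ownJ \<psi> f (path N j \<omega>) r' (\<pi> j \<omega>) < \<infinity>"
    "\<forall>k\<in>{1..N}. crossJ f (path N k \<omega>) r' (\<pi> k \<omega>) < \<infinity>"
  shows "jump_part N j \<omega> r \<le> jump_part N j \<omega> r'"
  unfolding jump_part_def using assms
  by (intro add_mono mult_left_mono sum_mono enn2real_mono ownJ_mono crossJ_mono) auto

lemma particle_positive:
  assumes N: "1 \<le> N" and j: "j \<in> {1..N}"
  shows "AE \<omega> in M. \<forall>r\<ge>0. 0 < X N j r \<omega>"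
proof -
  have "AE \<omega> in M. 0 < X0 j \<omega>" using X0_pos j by simp
  with solution_AE[OF N] show ?thesis
  proof eventually_elim
    case (elim \<omega>)
    then have sol_j: "cadlag (path N j \<omega>)" "\<And>r. 0 \<le> r \<Longrightarrow> set_integrable lborel {0..r} (drift N j \<omega>)"
      "\<And>r. 0 \<le> r \<Longrightarrow> path N j \<omega> r = X0 j \<omega> + (LINT u:{0..r}|lborel. drift N j \<omega> u) + jump_part N j \<omega> r"
      "\<And>r r'. 0 \<le> r \<Longrightarrow> r \<le> r' \<Longrightarrow> jump_part N j \<omega> r \<le> jump_part N j \<omega> r'"
      using j jump_part_mono by (auto simp: path_def)
    have lower: "- (max Cb 0 * La * path N j \<omega> r) \<le> drift N j \<omega> r"
      if "0 \<le> r" "0 < path N j \<omega> r" for r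
    proof -
      have "\<bar>a (path N j \<omega> r)\<bar> \<le> La * path N j \<omega> r"
        using a_lip[rule_format, of "path N j \<omega> r" 0] a0 that by simp
      then have "max Cb 0 * \<bar>a (path N j \<omega> r)\<bar> \<le> max Cb 0 * (La * path N j \<omega> r)"
        by (intro mult_left_mono) auto
      moreover have "- (max Cb 0 * \<bar>a (path N j \<omega> r)\<bar>) \<le> drift N j \<omega> r"
        unfolding drift_def path_def using that N
        by (intro drift_lower_bound[OF b_0 b_lip a0]) (auto simp: path_def empirical_in_P1_meas)
      ultimately show ?thesis by (simp add: mult.assoc)
    qed
    have J0: "0 \<le> jump_part N j \<omega> 0" by (simp add: jump_part_def sum_nonneg)
    have K: "0 \<le> max Cb 0 * La" using La_nonneg by simp
    show ?case
      using path_stays_positive[OF sol_j(1) _ K sol_j(3,2,4) J0 lower] elim by (simp add: path_def)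
  qed
qed

definition tail_const :: real where
  "tail_const = 1 / (1 - exp (- 1))"

definition small_shell_const :: real where
  "small_shell_const = 2 powr \<alpha> / (1 - 2 powr (\<alpha> - 1))"

definition large_shell_const :: real where
  "large_shell_const = 2 powr q / (1 - 2 powr (q - \<alpha>))"

lemma shell_consts_nonneg: "0 \<le> small_shell_const" "0 \<le> large_shell_const"
  using alpha q by (auto simp: small_shell_const_def large_shell_const_def powr_less_one less_imp_le)

definition hoelder_const :: real where
  "hoelder_const = Ch * (La * B + La * P * F
     + gauge_const * (1 + F * tail_const * (small_shell_const + large_shell_const)))"

end

locale particle_window = stable_particle_system +
  fixes N i :: nat and s t :: real
  assumes N: "1 \<le> N" and i: "i \<in> {1..N}" and s: "0 \<le> s" and st: "s < t" and window: "t - s \<le> 1"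
begin

definition \<delta> :: real where
  "\<delta> = t - s"

text \<open>Jumps of size about \<open>R\<close> occur \<open>O(1)\<close> times among all \<open>N\<close> particles during the window;
  smaller jumps are controlled in mean, larger ones by their number.\<close>
definition R :: real where
  "R = (real N * \<delta>) powr (1 / \<alpha>)"

definition \<epsilon> :: real where
  "\<epsilon> = \<delta> powr (1 / \<alpha>)"

definition box :: "real set \<Rightarrow> (real \<times> real \<times> real) set" where
  "box U = {s<..t} \<times> {0..F} \<times> U"

definition own_count :: "'a \<Rightarrow> ennreal" where
  "own_count \<omega> = emeasure (\<pi> i \<omega>) (box {0..})"

definition small_count :: "nat \<Rightarrow> nat \<Rightarrow> 'a \<Rightarrow> ennreal" where
  "small_count j k \<omega> = emeasure (\<pi> j \<omega>) (box {R / 2 ^ Suc k<..R / 2 ^ k})"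

definition large_count :: "nat \<Rightarrow> nat \<Rightarrow> 'a \<Rightarrow> ennreal" where
  "large_count j k \<omega> = emeasure (\<pi> j \<omega>) (box {2 ^ k * R<..2 ^ Suc k * R})"

definition small_jumps :: "'a \<Rightarrow> ennreal" where
  "small_jumps \<omega> = (\<Sum>j\<in>{1..N}. \<Sum>k. ennreal (R / 2 ^ k) * small_count j k \<omega>)"

definition large_jumps_powr :: "'a \<Rightarrow> ennreal" where
  "large_jumps_powr \<omega> = (\<Sum>j\<in>{1..N}. \<Sum>k. ennreal ((2 ^ Suc k * R) powr q) * large_count j k \<omega>)"

definition majorant :: "'a \<Rightarrow> ennreal" where
  "majorant \<omega> = ennreal Ch * (ennreal (La * B * \<delta>) + ennreal (La * P) * own_count \<omega>
     + ennreal gauge_const * (ennreal (\<epsilon> powr q)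
        + ennreal (\<epsilon> powr (q - 1) * real N powr (- 1 / \<alpha>)) * small_jumps \<omega>
        + ennreal (real N powr (- q / \<alpha>)) * large_jumps_powr \<omega>))"

lemma \<delta>_bounds: "0 < \<delta>" "\<delta> \<le> 1"
  using st window by (auto simp: \<delta>_def)

lemma R_pos: "0 < R"
  using \<delta>_bounds N by (simp add: R_def)

lemma sets_box: "U \<in> sets borel \<Longrightarrow> box U \<in> sets (intensity \<nu>)"
  unfolding box_def sets_intensity[OF nu(2)] by (intro pair_measureI) auto

lemma poisson_random_measure_\<pi>: "j \<in> {1..N} \<Longrightarrow> poisson_random_measure M (intensity \<nu>) (\<pi> j)"
  using prm by simp

lemma sets_\<pi>: "j \<in> {1..N} \<Longrightarrow> \<omega> \<in> space M \<Longrightarrow> sets (\<pi> j \<omega>) = sets (borel \<Otimes>\<^sub>M (borel \<Otimes>\<^sub>M borel))"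
  using poisson_random_measure_\<pi> sets_intensity[OF nu(2)] by (simp add: poisson_random_measure_def)

lemma emeasure_intensity_box_le:
  assumes "U \<in> sets borel"
  shows "emeasure (intensity \<nu>) (box U) \<le> ennreal (\<delta> * F) * emeasure \<nu> U"
  using emeasure_intensity_box[OF nu(1,2) s F_nonneg assms, of t] st F_nonneg
  by (simp add: box_def \<delta>_def ennreal_mult mult.assoc)

lemma count_measurable:
  "j \<in> {1..N} \<Longrightarrow> U \<in> sets borel \<Longrightarrow> (\<lambda>\<omega>. emeasure (\<pi> j \<omega>) (box U)) \<in> borel_measurable M"
  using poisson_random_measure_\<pi> sets_box by (simp add: poisson_random_measure_def)

lemma count_finite: "U \<in> sets borel \<Longrightarrow> emeasure (intensity \<nu>) (box U) < \<infinity>"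
  using emeasure_intensity_box_le[of U] prob_space.emeasure_le_1[OF nu(1), of U]
    mult_left_mono[of "emeasure \<nu> U" 1 "ennreal (\<delta> * F)"]
  by (simp add: le_less_trans)

lemma nn_integral_count_le:
  assumes "j \<in> {1..N}" "U \<in> sets borel"
  shows "(\<integral>\<^sup>+ \<omega>. emeasure (\<pi> j \<omega>) (box U) \<partial>M) \<le> ennreal (\<delta> * F) * emeasure \<nu> U"
  using poisson_random_measure_count(2)[OF M poisson_random_measure_\<pi> sets_box count_finite] assms
    emeasure_intensity_box_le by simp

lemma nn_integral_count_tail_le:
  assumes "j \<in> {1..N}" "U \<in> sets borel" "0 < x" "U \<subseteq> {x<..}"
  shows "(\<integral>\<^sup>+ \<omega>. emeasure (\<pi> j \<omega>) (box U) \<partial>M) \<le> ennreal (\<delta> * F * tail_const * x powr (- \<alpha>))"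
proof -
  have "emeasure \<nu> U \<le> emeasure \<nu> {x<..}" using assms nu(2) by (intro emeasure_mono) auto
  also have "\<dots> \<le> ennreal (x powr (- \<alpha>) / (1 - exp (- 1)))" using stable_tail_le[OF nu assms(3)] .
  finally have "ennreal (\<delta> * F) * emeasure \<nu> U \<le> ennreal (\<delta> * F) * ennreal (x powr (- \<alpha>) / (1 - exp (- 1)))"
    by (rule mult_left_mono) simp
  also have "\<dots> = ennreal (\<delta> * F * tail_const * x powr (- \<alpha>))"
    using \<delta>_bounds F_nonneg by (simp add: tail_const_def flip: ennreal_mult)
  finally show ?thesis using nn_integral_count_le[OF assms(1,2)] by (rule order_trans[rotated])
qed

lemma large_count_nat: "AE \<omega> in M. \<forall>j\<in>{1..N}. \<forall>k. \<exists>n::nat. large_count j k \<omega> = of_nat n"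
  unfolding AE_ball_countable[OF countable_finite[OF finite_atLeastAtMost]] AE_all_countable large_count_def
  by (intro ballI allI poisson_random_measure_count(1)[OF M poisson_random_measure_\<pi> sets_box count_finite]) simp_all

lemma own_count_measurable [measurable]: "own_count \<in> borel_measurable M"
  using count_measurable[OF i, of "{0..}"] by (simp add: own_count_def[abs_def])

lemma small_count_measurable: "j \<in> {1..N} \<Longrightarrow> small_count j k \<in> borel_measurable M"
  using count_measurable[of j "{R / 2 ^ Suc k<..R / 2 ^ k}"] by (simp add: small_count_def[abs_def])

lemma large_count_measurable: "j \<in> {1..N} \<Longrightarrow> large_count j k \<in> borel_measurable M"
  using count_measurable[of j "{2 ^ k * R<..2 ^ Suc k * R}"] by (simp add: large_count_def[abs_def])

lemma small_jumps_measurable [measurable]: "small_jumps \<in> borel_measurable M"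
proof -
  have "(\<lambda>\<omega>. \<Sum>k. ennreal (R / 2 ^ k) * small_count j k \<omega>) \<in> borel_measurable M" if "j \<in> {1..N}" for j
  proof -
    note [measurable] = small_count_measurable[OF that]
    show ?thesis by measurable
  qed
  then show ?thesis unfolding small_jumps_def[abs_def] by (intro borel_measurable_sum)
qed

lemma large_jumps_powr_measurable [measurable]: "large_jumps_powr \<in> borel_measurable M"
proof -
  have "(\<lambda>\<omega>. \<Sum>k. ennreal ((2 ^ Suc k * R) powr q) * large_count j k \<omega>) \<in> borel_measurable M"
    if "j \<in> {1..N}" for j
  proof -
    note [measurable] = large_count_measurable[OF that]
    show ?thesis by measurable
  qed
  then show ?thesis unfolding large_jumps_powr_def[abs_def] by (intro borel_measurable_sum)
qed

lemma nn_integral_own_count_le: "(\<integral>\<^sup>+ \<omega>. own_count \<omega> \<partial>M) \<le> ennreal (\<delta> * F)"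
  using nn_integral_count_le[OF i, of "{0..}"] prob_space.emeasure_le_1[OF nu(1), of "{0..}"]
    mult_left_mono[of "emeasure \<nu> {0..}" 1 "ennreal (\<delta> * F)"]
  by (simp add: own_count_def)

lemma nn_integral_small_jumps_le:
  "(\<integral>\<^sup>+ \<omega>. small_jumps \<omega> \<partial>M)
     \<le> of_nat N * ennreal (\<delta> * F * tail_const * R powr (1 - \<alpha>) * small_shell_const)"
proof -
  have "(\<integral>\<^sup>+ \<omega>. small_jumps \<omega> \<partial>M) = (\<Sum>j\<in>{1..N}. \<Sum>k. ennreal (R / 2 ^ k) * (\<integral>\<^sup>+ \<omega>. small_count j k \<omega> \<partial>M))"
    unfolding small_jumps_def by (rule nn_integral_weighted_counts[OF small_count_measurable])
  also have "\<dots> \<le> (\<Sum>j\<in>{1..N}. \<Sum>k. ennreal (R / 2 ^ k) * ennreal (\<delta> * F * tail_const * (R / 2 ^ Suc k) powr (- \<alpha>)))"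
    unfolding small_count_def using R_pos
    by (intro sum_mono suminf_le mult_left_mono nn_integral_count_tail_le) (auto simp: field_simps)
  also have "\<dots> = of_nat N * ennreal (\<delta> * F * tail_const * R powr (1 - \<alpha>) * small_shell_const)"
    using sums_dyadic_small_shells[OF R_pos alpha(2), of "\<delta> * F * tail_const"] \<delta>_bounds F_nonneg
    by (simp add: tail_const_def small_shell_const_def)
  finally show ?thesis .
qed

lemma nn_integral_large_jumps_powr_le:
  "(\<integral>\<^sup>+ \<omega>. large_jumps_powr \<omega> \<partial>M)
     \<le> of_nat N * ennreal (\<delta> * F * tail_const * R powr (q - \<alpha>) * large_shell_const)"
proof -
  have "(\<integral>\<^sup>+ \<omega>. large_jumps_powr \<omega> \<partial>M)
      = (\<Sum>j\<in>{1..N}. \<Sum>k. ennreal ((2 ^ Suc k * R) powr q) * (\<integral>\<^sup>+ \<omega>. large_count j k \<omega> \<partial>M))"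
    unfolding large_jumps_powr_def by (rule nn_integral_weighted_counts[OF large_count_measurable])
  also have "\<dots> \<le> (\<Sum>j\<in>{1..N}. \<Sum>k. ennreal ((2 ^ Suc k * R) powr q)
                    * ennreal (\<delta> * F * tail_const * (2 ^ k * R) powr (- \<alpha>)))"
    unfolding large_count_def using R_pos
    by (intro sum_mono suminf_le mult_left_mono nn_integral_count_tail_le) auto
  also have "\<dots> = of_nat N * ennreal (\<delta> * F * tail_const * R powr (q - \<alpha>) * large_shell_const)"
    using sums_dyadic_large_shells[OF R_pos q(2), of "\<delta> * F * tail_const"] \<delta>_bounds F_nonneg
    by (simp add: tail_const_def large_shell_const_def)
  finally show ?thesis .
qed

lemma R_powr: "R powr e = real N powr (e / \<alpha>) * \<delta> powr (e / \<alpha>)"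
  using \<delta>_bounds N by (simp add: R_def powr_powr powr_mult)

lemma small_jumps_scaling:
  "\<epsilon> powr (q - 1) * real N powr (- 1 / \<alpha>) * (real N * (\<delta> * R powr (1 - \<alpha>))) = \<delta> powr (q / \<alpha>)"
proof -
  have N0: "0 < real N" using N by simp
  have "\<epsilon> powr (q - 1) * real N powr (- 1 / \<alpha>) * (real N * (\<delta> * R powr (1 - \<alpha>)))
      = (real N powr (- 1 / \<alpha>) * real N powr 1 * real N powr ((1 - \<alpha>) / \<alpha>))
        * (\<delta> powr ((q - 1) / \<alpha>) * \<delta> powr 1 * \<delta> powr ((1 - \<alpha>) / \<alpha>))"
    using N0 \<delta>_bounds by (simp add: R_powr \<epsilon>_def powr_powr ac_simps)
  also have "\<dots> = real N powr (- 1 / \<alpha> + 1 + (1 - \<alpha>) / \<alpha>) * \<delta> powr ((q - 1) / \<alpha> + 1 + (1 - \<alpha>) / \<alpha>)"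
    by (simp only: powr_add)
  also have "\<dots> = real N powr 0 * \<delta> powr (q / \<alpha>)"
  proof -
    have "- 1 / \<alpha> + 1 + (1 - \<alpha>) / \<alpha> = 0" "(q - 1) / \<alpha> + 1 + (1 - \<alpha>) / \<alpha> = q / \<alpha>"
      using alpha by (simp_all add: field_simps)
    then show ?thesis by (simp only:)
  qed
  also have "\<dots> = \<delta> powr (q / \<alpha>)" using N0 by simp
  finally show ?thesis .
qed

lemma large_jumps_scaling: "real N powr (- q / \<alpha>) * (real N * (\<delta> * R powr (q - \<alpha>))) = \<delta> powr (q / \<alpha>)"
proof -
  have N0: "0 < real N" using N by simp
  have "real N powr (- q / \<alpha>) * (real N * (\<delta> * R powr (q - \<alpha>)))
      = (real N powr (- q / \<alpha>) * real N powr 1 * real N powr ((q - \<alpha>) / \<alpha>))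
        * (\<delta> powr 1 * \<delta> powr ((q - \<alpha>) / \<alpha>))"
    using N0 \<delta>_bounds by (simp add: R_powr ac_simps)
  also have "\<dots> = real N powr (- q / \<alpha> + 1 + (q - \<alpha>) / \<alpha>) * \<delta> powr (1 + (q - \<alpha>) / \<alpha>)"
    by (simp only: powr_add)
  also have "\<dots> = real N powr 0 * \<delta> powr (q / \<alpha>)"
  proof -
    have "- q / \<alpha> + 1 + (q - \<alpha>) / \<alpha> = 0" "1 + (q - \<alpha>) / \<alpha> = q / \<alpha>"
      using alpha by (simp_all add: field_simps)
    then show ?thesis by (simp only:)
  qed
  also have "\<dots> = \<delta> powr (q / \<alpha>)" using N0 by simp
  finally show ?thesis .
qed

definition expected_majorant :: real where
  "expected_majorant = Ch * (La * B * \<delta> + La * P * (\<delta> * F) + gauge_const * (\<epsilon> powr q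
     + \<epsilon> powr (q - 1) * real N powr (- 1 / \<alpha>) * (real N * (\<delta> * F * tail_const * R powr (1 - \<alpha>) * small_shell_const))
     + real N powr (- q / \<alpha>) * (real N * (\<delta> * F * tail_const * R powr (q - \<alpha>) * large_shell_const))))"

lemma nn_integral_majorant_le_expected: "(\<integral>\<^sup>+ \<omega>. majorant \<omega> \<partial>M) \<le> ennreal expected_majorant"
proof -
  have "(\<integral>\<^sup>+ \<omega>. majorant \<omega> \<partial>M) = ennreal Ch * (ennreal (La * B * \<delta>) + ennreal (La * P) * (\<integral>\<^sup>+ \<omega>. own_count \<omega> \<partial>M)
      + ennreal gauge_const * (ennreal (\<epsilon> powr q)
        + ennreal (\<epsilon> powr (q - 1) * real N powr (- 1 / \<alpha>)) * (\<integral>\<^sup>+ \<omega>. small_jumps \<omega> \<partial>M)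
        + ennreal (real N powr (- q / \<alpha>)) * (\<integral>\<^sup>+ \<omega>. large_jumps_powr \<omega> \<partial>M)))"
    unfolding majorant_def by (simp add: nn_integral_cmult nn_integral_add prob_space.emeasure_space_1[OF M])
  also have "\<dots> \<le> ennreal Ch * (ennreal (La * B * \<delta>) + ennreal (La * P) * ennreal (\<delta> * F)
      + ennreal gauge_const * (ennreal (\<epsilon> powr q)
        + ennreal (\<epsilon> powr (q - 1) * real N powr (- 1 / \<alpha>))
          * (of_nat N * ennreal (\<delta> * F * tail_const * R powr (1 - \<alpha>) * small_shell_const))
        + ennreal (real N powr (- q / \<alpha>))
          * (of_nat N * ennreal (\<delta> * F * tail_const * R powr (q - \<alpha>) * large_shell_const))))"
    using nn_integral_own_count_le nn_integral_small_jumps_le nn_integral_large_jumps_powr_le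
    by (intro mult_left_mono add_mono order_refl) auto
  also have "\<dots> = ennreal expected_majorant"
    using Ch_nonneg La_nonneg B_nonneg P_nonneg \<delta>_bounds F_nonneg shell_consts_nonneg
    unfolding expected_majorant_def
    by (simp add: tail_const_def gauge_const_def ennreal_of_nat_eq_real_of_nat ennreal_mult'[symmetric]
        ennreal_plus[symmetric] del: ennreal_plus)
  finally show ?thesis .
qed

lemma expected_majorant_le: "expected_majorant \<le> hoelder_const * \<delta> powr (q / \<alpha>)"
proof -
  define K where "K = gauge_const * (1 + F * tail_const * (small_shell_const + large_shell_const))"
  have eq0: "\<epsilon> powr q = \<delta> powr (q / \<alpha>)" using \<delta>_bounds by (simp add: \<epsilon>_def powr_powr)
  have eq1: "\<epsilon> powr (q - 1) * real N powr (- 1 / \<alpha>)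
      * (real N * (\<delta> * F * tail_const * R powr (1 - \<alpha>) * small_shell_const))
      = F * tail_const * small_shell_const * \<delta> powr (q / \<alpha>)"
    using small_jumps_scaling by (simp add: ac_simps)
  have eq2: "real N powr (- q / \<alpha>) * (real N * (\<delta> * F * tail_const * R powr (q - \<alpha>) * large_shell_const))
      = F * tail_const * large_shell_const * \<delta> powr (q / \<alpha>)"
    using large_jumps_scaling by (simp add: ac_simps)
  have "expected_majorant = Ch * ((La * B + La * P * F) * \<delta> + K * \<delta> powr (q / \<alpha>))"
    unfolding expected_majorant_def eq0 eq1 eq2 K_def by (simp add: algebra_simps)
  also have "\<dots> \<le> Ch * ((La * B + La * P * F) * \<delta> powr (q / \<alpha>) + K * \<delta> powr (q / \<alpha>))"
  proof -
    have "\<delta> \<le> \<delta> powr (q / \<alpha>)"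
      using powr_mono'[of "q / \<alpha>" 1 \<delta>] \<delta>_bounds q alpha by simp
    then have "(La * B + La * P * F) * \<delta> \<le> (La * B + La * P * F) * \<delta> powr (q / \<alpha>)"
      using La_nonneg B_nonneg P_nonneg F_nonneg by (intro mult_left_mono) auto
    then show ?thesis using Ch_nonneg by (simp add: mult_left_mono)
  qed
  also have "\<dots> = hoelder_const * \<delta> powr (q / \<alpha>)"
    unfolding hoelder_const_def K_def by (simp add: algebra_simps)
  finally show ?thesis .
qed

lemma nn_integral_majorant_le: "(\<integral>\<^sup>+ \<omega>. majorant \<omega> \<partial>M) \<le> ennreal (hoelder_const * \<delta> powr (q / \<alpha>))"
  using nn_integral_majorant_le_expected expected_majorant_le by (simp add: order_trans ennreal_leI)

definition own_incr :: "'a \<Rightarrow> real" where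
  "own_incr \<omega> = enn2real (ownJ \<psi> f (path N i \<omega>) t (\<pi> i \<omega>)) - enn2real (ownJ \<psi> f (path N i \<omega>) s (\<pi> i \<omega>))"

definition cross_incr :: "nat \<Rightarrow> 'a \<Rightarrow> real" where
  "cross_incr j \<omega> = enn2real (crossJ f (path N j \<omega>) t (\<pi> j \<omega>)) - enn2real (crossJ f (path N j \<omega>) s (\<pi> j \<omega>))"

definition regular :: "'a \<Rightarrow> bool" where
  "regular \<omega> \<longleftrightarrow> \<omega> \<in> space M \<and> (\<forall>r\<ge>0. 0 < X N i r \<omega>)
     \<and> (\<forall>j\<in>{1..N}. \<forall>k. \<exists>n::nat. large_count j k \<omega> = of_nat n)
     \<and> (\<forall>j\<in>{1..N}. cadlag (path N j \<omega>) \<and> (\<forall>r\<ge>0.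
          set_integrable lborel {0..r} (drift N j \<omega>) \<and> ownJ \<psi> f (path N j \<omega>) r (\<pi> j \<omega>) < \<infinity> \<and>
          (\<forall>k\<in>{1..N}. crossJ f (path N k \<omega>) r (\<pi> k \<omega>) < \<infinity>) \<and>
          X N j r \<omega> = X0 j \<omega> + (LINT u:{0..r}|lborel. drift N j \<omega> u) + jump_part N j \<omega> r))"

lemma AE_regular: "AE \<omega> in M. regular \<omega>"
  using solution_AE[OF N] particle_positive[OF N i] large_count_nat AE_space
  unfolding regular_def by eventually_elim blast

lemma own_incr_le:
  assumes "regular \<omega>"
  shows "0 \<le> own_incr \<omega>" "ennreal (own_incr \<omega>) \<le> ennreal P * own_count \<omega>"
proof -
  have reg: "\<omega> \<in> space M" "cadlag (path N i \<omega>)" "ownJ \<psi> f (path N i \<omega>) t (\<pi> i \<omega>) < \<infinity>"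
    using assms i s st unfolding regular_def by auto
  have "ownJ \<psi> f (path N i \<omega>) t (\<pi> i \<omega>) \<le> ownJ \<psi> f (path N i \<omega>) s (\<pi> i \<omega>) + ennreal P * own_count \<omega>"
    unfolding own_count_def box_def
    using ownJ_increment_le[OF sets_\<pi>[OF i reg(1)] leftlim_measurable[OF reg(2)] f_meas psi_meas f_le psi_le s]
      st by simp
  from enn2real_increment_le[OF this ownJ_mono[OF less_imp_le[OF st]]] reg(3)
  show "0 \<le> own_incr \<omega>" "ennreal (own_incr \<omega>) \<le> ennreal P * own_count \<omega>"
    by (simp_all add: own_incr_def)
qed

lemma cross_incr_le:
  assumes "regular \<omega>" and j: "j \<in> {1..N}"
  shows "0 \<le> cross_incr j \<omega>"
    "ennreal (cross_incr j \<omega>) \<le> (\<Sum>k. ennreal (R / 2 ^ k) * small_count j k \<omega>)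
       + (\<Sum>k. ennreal (2 ^ Suc k * R) * large_count j k \<omega>)"
proof -
  have reg: "\<omega> \<in> space M" "cadlag (path N j \<omega>)" "crossJ f (path N j \<omega>) t (\<pi> j \<omega>) < \<infinity>"
    using assms i s st unfolding regular_def by auto
  have "crossJ f (path N j \<omega>) t (\<pi> j \<omega>) \<le> crossJ f (path N j \<omega>) s (\<pi> j \<omega>)
      + (\<integral>\<^sup>+ x. ennreal (snd (snd x)) * indicator ({s<..t} \<times> {0..F} \<times> {0..}) x \<partial>\<pi> j \<omega>)"
    using st by (intro crossJ_increment_le[OF sets_\<pi>[OF j reg(1)] leftlim_measurable[OF reg(2)] f_meas f_le s]) simp
  also have "\<dots> \<le> crossJ f (path N j \<omega>) s (\<pi> j \<omega>)
      + ((\<Sum>k. ennreal (R / 2 ^ k) * small_count j k \<omega>) + (\<Sum>k. ennreal (2 ^ Suc k * R) * large_count j k \<omega>))"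
    unfolding small_count_def large_count_def box_def
    by (intro add_left_mono nn_integral_mark_le_dyadic_shells[OF sets_\<pi>[OF j reg(1)] _ _ R_pos]) auto
  finally have "crossJ f (path N j \<omega>) t (\<pi> j \<omega>) \<le> crossJ f (path N j \<omega>) s (\<pi> j \<omega>)
      + ((\<Sum>k. ennreal (R / 2 ^ k) * small_count j k \<omega>) + (\<Sum>k. ennreal (2 ^ Suc k * R) * large_count j k \<omega>))" .
  from enn2real_increment_le[OF this crossJ_mono[OF less_imp_le[OF st]]] reg(3)
  show "0 \<le> cross_incr j \<omega>"
    "ennreal (cross_incr j \<omega>) \<le> (\<Sum>k. ennreal (R / 2 ^ k) * small_count j k \<omega>)
       + (\<Sum>k. ennreal (2 ^ Suc k * R) * large_count j k \<omega>)"
    by (simp_all add: cross_incr_def)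
qed

lemma increment_le:
  assumes "regular \<omega>"
  shows "\<bar>X N i t \<omega> - X N i s \<omega>\<bar>
       \<le> B * \<delta> + own_incr \<omega> + real N powr (- 1 / \<alpha>) * (\<Sum>j\<in>{1..N} - {i}. cross_incr j \<omega>)"
proof -
  have reg: "\<And>r. 0 \<le> r \<Longrightarrow> 0 < X N i r \<omega>" "set_integrable lborel {0..t} (drift N i \<omega>)"
    "\<And>r. 0 \<le> r \<Longrightarrow> X N i r \<omega> = X0 i \<omega> + (LINT u:{0..r}|lborel. drift N i \<omega> u) + jump_part N i \<omega> r"
    using assms i s st unfolding regular_def by auto
  have drift: "\<bar>(LINT u:{0..t}|lborel. drift N i \<omega> u) - (LINT u:{0..s}|lborel. drift N i \<omega> u)\<bar> \<le> B * \<delta>"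
    unfolding \<delta>_def using s st reg(1) b_bound empirical_in_P1_meas[OF N]
    by (intro set_integral_increment_abs_le[OF reg(2)]) (auto simp: drift_def less_imp_le)
  have "jump_part N i \<omega> t - jump_part N i \<omega> s
      = own_incr \<omega> + real N powr (- 1 / \<alpha>) * (\<Sum>j\<in>{1..N} - {i}. cross_incr j \<omega>)"
    by (simp add: jump_part_def own_incr_def cross_incr_def sum_subtractf algebra_simps)
  moreover have "0 \<le> real N powr (- 1 / \<alpha>) * (\<Sum>j\<in>{1..N} - {i}. cross_incr j \<omega>)"
    by (intro mult_nonneg_nonneg sum_nonneg) (auto intro: cross_incr_le(1)[OF assms])
  ultimately show ?thesis
    using drift reg(3)[of t] reg(3)[of s] s st own_incr_le(1)[OF assms] by (simp add: abs_le_iff)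
qed

lemma other_incr_powr_le:
  assumes "regular \<omega>"
  shows "ennreal (real N powr (- 1 / \<alpha>) * (\<Sum>j\<in>{1..N} - {i}. cross_incr j \<omega>)) powr\<^sub>e q
     \<le> ennreal (\<epsilon> powr q) + ennreal (\<epsilon> powr (q - 1) * real N powr (- 1 / \<alpha>)) * small_jumps \<omega>
       + ennreal (real N powr (- q / \<alpha>)) * large_jumps_powr \<omega>"
proof -
  define c where "c = real N powr (- 1 / \<alpha>)"
  have c: "0 \<le> c" by (simp add: c_def)
  have "ennreal (\<Sum>j\<in>{1..N} - {i}. cross_incr j \<omega>) = (\<Sum>j\<in>{1..N} - {i}. ennreal (cross_incr j \<omega>))"
    by (rule sum_ennreal[symmetric]) (auto intro: cross_incr_le(1)[OF assms])
  also have "\<dots> \<le> (\<Sum>j\<in>{1..N}. ennreal (cross_incr j \<omega>))" by (intro sum_mono2) auto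
  also have "\<dots> \<le> small_jumps \<omega> + (\<Sum>j\<in>{1..N}. \<Sum>k. ennreal (2 ^ Suc k * R) * large_count j k \<omega>)"
    unfolding small_jumps_def sum.distrib[symmetric] by (intro sum_mono cross_incr_le(2)[OF assms])
  finally have "ennreal c * ennreal (\<Sum>j\<in>{1..N} - {i}. cross_incr j \<omega>)
      \<le> ennreal c * (small_jumps \<omega> + (\<Sum>j\<in>{1..N}. \<Sum>k. ennreal (2 ^ Suc k * R) * large_count j k \<omega>))"
    by (rule mult_left_mono) simp
  moreover have "0 \<le> (\<Sum>j\<in>{1..N} - {i}. cross_incr j \<omega>)"
    by (intro sum_nonneg) (auto intro: cross_incr_le(1)[OF assms])
  ultimately have "ennreal (c * (\<Sum>j\<in>{1..N} - {i}. cross_incr j \<omega>))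
      \<le> ennreal c * (small_jumps \<omega> + (\<Sum>j\<in>{1..N}. \<Sum>k. ennreal (2 ^ Suc k * R) * large_count j k \<omega>))"
    using c by (simp add: ennreal_mult)
  then have "ennreal (c * (\<Sum>j\<in>{1..N} - {i}. cross_incr j \<omega>)) powr\<^sub>e q
      \<le> ennreal (\<epsilon> powr q) + ennreal (\<epsilon> powr (q - 1)) * (ennreal c * small_jumps \<omega>)
        + ennreal (c powr q) * large_jumps_powr \<omega>"
    unfolding large_jumps_powr_def using \<delta>_bounds R_pos assms c
    by (intro order_trans[OF enn_powr_mono enn_powr_jump_split[OF q(1) q_le_1]])
      (auto simp: \<epsilon>_def regular_def q)
  moreover have "c powr q = real N powr (- q / \<alpha>)" by (simp add: c_def powr_powr)
  ultimately show ?thesis by (simp add: c_def ennreal_mult mult.assoc)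
qed

lemma regular_increment_le:
  assumes "regular \<omega>"
  shows "ennreal \<bar>h (X N i t \<omega>) - h (X N i s \<omega>)\<bar> \<le> majorant \<omega>"
proof -
  define Z where "Z = real N powr (- 1 / \<alpha>) * (\<Sum>j\<in>{1..N} - {i}. cross_incr j \<omega>)"
  have Z: "0 \<le> Z"
    unfolding Z_def by (intro mult_nonneg_nonneg sum_nonneg) (auto intro: cross_incr_le(1)[OF assms])
  have pos: "0 \<le> X N i r \<omega>" if "0 \<le> r" for r using assms that by (auto simp: regular_def less_imp_le)
  have "\<bar>h (X N i t \<omega>) - h (X N i s \<omega>)\<bar> \<le> Ch * a \<bar>X N i t \<omega> - X N i s \<omega>\<bar>"
    using h_increment_le pos s st by simp
  also have "\<dots> \<le> Ch * (La * (B * \<delta>) + La * own_incr \<omega> + gauge_const * Z powr q)"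
    using increment_le[OF assms] B_nonneg \<delta>_bounds own_incr_le(1)[OF assms] Z
    by (intro mult_left_mono[OF gauge_increment_le Ch_nonneg]) (simp_all add: Z_def)
  finally have "ennreal \<bar>h (X N i t \<omega>) - h (X N i s \<omega>)\<bar>
      \<le> ennreal Ch * (ennreal (La * B * \<delta>) + ennreal La * ennreal (own_incr \<omega>)
          + ennreal gauge_const * ennreal Z powr\<^sub>e q)"
    using Ch_nonneg La_nonneg B_nonneg \<delta>_bounds own_incr_le(1)[OF assms] Z
    by (simp add: enn_powr_ennreal gauge_const_def ennreal_leI mult.assoc flip: ennreal_mult ennreal_plus)
  also have "\<dots> \<le> majorant \<omega>"
    unfolding majorant_def Z_def
    using own_incr_le(2)[OF assms] other_incr_powr_le[OF assms] La_nonneg P_nonneg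
    by (intro mult_left_mono add_mono order_refl) (auto simp: ennreal_mult mult.assoc intro: mult_left_mono)
  finally show ?thesis .
qed

lemma nn_integral_increment_le:
  "(\<integral>\<^sup>+ \<omega>. ennreal \<bar>h (X N i t \<omega>) - h (X N i s \<omega>)\<bar> \<partial>M) \<le> ennreal (hoelder_const * (t - s) powr (q / \<alpha>))"
proof -
  have "AE \<omega> in M. ennreal \<bar>h (X N i t \<omega>) - h (X N i s \<omega>)\<bar> \<le> majorant \<omega>"
    using AE_regular by eventually_elim (rule regular_increment_le)
  then have "(\<integral>\<^sup>+ \<omega>. ennreal \<bar>h (X N i t \<omega>) - h (X N i s \<omega>)\<bar> \<partial>M) \<le> (\<integral>\<^sup>+ \<omega>. majorant \<omega> \<partial>M)"
    by (rule nn_integral_mono_AE)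
  also have "\<dots> \<le> ennreal (hoelder_const * (t - s) powr (q / \<alpha>))"
    using nn_integral_majorant_le by (simp add: \<delta>_def)
  finally show ?thesis .
qed

end

context stable_particle_system
begin

lemma increment_hoelder:
  assumes "1 \<le> N" "i \<in> {1..N}" "0 \<le> s" "0 \<le> t" "\<bar>s - t\<bar> \<le> 1"
  shows "(\<integral>\<^sup>+ \<omega>. ennreal \<bar>h (X N i t \<omega>) - h (X N i s \<omega>)\<bar> \<partial>M)
       \<le> ennreal (hoelder_const * \<bar>t - s\<bar> powr (q / \<alpha>))"
proof (cases s t rule: linorder_cases)
  case less
  interpret particle_window \<alpha> q c \<nu> a f \<psi> h b M \<pi> X0 X F P B Cb La Ch N i s t
    using assms less by unfold_locales auto
  show ?thesis using nn_integral_increment_le less by simp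
next
  case greater
  interpret particle_window \<alpha> q c \<nu> a f \<psi> h b M \<pi> X0 X F P B Cb La Ch N i t s
    using assms greater by unfold_locales auto
  show ?thesis using nn_integral_increment_le greater by (simp add: abs_minus_commute)
qed simp

end

theorem mainTheorem10:
  fixes \<alpha> q c fl :: real
    and \<nu> \<nu>0 :: "real measure"
    and a f \<psi> h :: "real \<Rightarrow> real"
    and b :: "real \<Rightarrow> real measure \<Rightarrow> real"
    and M :: "'w measure"
    and \<pi> :: "nat \<Rightarrow> 'w \<Rightarrow> (real \<times> real \<times> real) measure"
    and X0 :: "nat \<Rightarrow> 'w \<Rightarrow> real"
    and X :: "nat \<Rightarrow> nat \<Rightarrow> real \<Rightarrow> 'w \<Rightarrow> real"
  assumes alpha: "0 < \<alpha>" "\<alpha> < 1"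
    and nu: "prob_space \<nu>" "sets \<nu> = sets (borel :: real measure)" "emeasure \<nu> {..<0} = 0"
       "\<forall>l\<ge>0. (\<integral>y. exp (- l * y) \<partial>\<nu>) = exp (- (l powr \<alpha>))"
    and q: "0 < q" "q < \<alpha>"
    and a_C2: "\<exists>a1 a2. (\<forall>x. (a has_real_derivative a1 x) (at x) \<and> (a1 has_real_derivative a2 x) (at x))
                 \<and> continuous_on UNIV a2 \<and> (\<exists>K. \<forall>x. \<bar>a2 x\<bar> \<le> K * \<bar>a1 x\<bar>)"
    and a_odd: "\<forall>x. a (- x) = - a x" and a0: "a 0 = 0"
    and a_concave: "concave_on {0..} a"
    and a_lip: "\<exists>L. \<forall>x y. \<bar>a x - a y\<bar> \<le> L * \<bar>x - y\<bar>"
    and a_mono: "strict_mono a"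
    and a_tail: "\<forall>x\<ge>1. a x = c + x powr q"
    and b_bdd: "\<exists>B. \<forall>x\<ge>0. \<forall>\<mu>\<in>P1_meas. \<bar>b x \<mu>\<bar> \<le> B"
    and b_0: "\<forall>\<mu>\<in>P1_meas. b 0 \<mu> \<ge> 0"
    and b_lip: "\<exists>C. \<forall>x\<ge>0. \<forall>x'\<ge>0. \<forall>\<mu>\<in>P1_meas. \<forall>\<mu>'\<in>P1_meas.
                 ennreal \<bar>b x \<mu> - b x' \<mu>'\<bar> \<le> ennreal C * (ennreal \<bar>a x - a x'\<bar> + Wa a \<mu> \<mu>')"
    and f_bdd: "bounded (range f)" and f_lip: "\<exists>L. \<forall>x y. \<bar>f x - f y\<bar> \<le> L * \<bar>x - y\<bar>"
    and f_low: "0 < fl" "\<forall>x. fl \<le> f x"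
    and psi_bdd: "bounded (range \<psi>)" and psi_nonneg: "\<forall>x. 0 \<le> \<psi> x"
    and psi_lip: "\<exists>L. \<forall>x y. \<bar>\<psi> x - \<psi> y\<bar> \<le> L * \<bar>x - y\<bar>"
    and f_psi_a: "\<exists>C. \<forall>x\<ge>0. \<forall>y\<ge>0. \<bar>f x - f y\<bar> + \<bar>\<psi> x - \<psi> y\<bar> \<le> C * \<bar>a x - a y\<bar>"
    and nu0: "prob_space \<nu>0" "sets \<nu>0 = sets (borel :: real measure)" "emeasure \<nu>0 {..<0} = 0"
       "integrable \<nu>0 (\<lambda>x. \<bar>x\<bar> powr max (2 * \<alpha>) 1)" "emeasure \<nu>0 {0} = 0"
    and M: "prob_space M"
    and prm: "\<forall>i\<ge>1. poisson_random_measure M (intensity \<nu>) (\<pi> i)"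
    and X0: "\<forall>i\<ge>1. X0 i \<in> borel_measurable M \<and> distr M borel (X0 i) = \<nu>0"
    and indep: "prob_space.indep_sets M
        (\<lambda>k. case k of Inl i \<Rightarrow> prm_sigma M (intensity \<nu>) (\<pi> i)
                      | Inr i \<Rightarrow> {X0 i -` B \<inter> space M | B. B \<in> sets (borel :: real measure)})
        (Inl ` {1..} \<union> Inr ` {1..})"
    and sol: "\<forall>N\<ge>1. particle_solution M b f \<psi> \<alpha> \<pi> X0 N (X N)"
    and h_lip: "\<exists>Ch. \<forall>x y. \<bar>h x - h y\<bar> \<le> Ch * \<bar>a x - a y\<bar>"
  shows "\<exists>C. \<forall>N\<ge>1. \<forall>i\<in>{1..N}. \<forall>s\<ge>0. \<forall>t\<ge>0. \<bar>s - t\<bar> \<le> 1 \<longrightarrow>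
           (\<integral>\<^sup>+ \<omega>. ennreal \<bar>h (X N i t \<omega>) - h (X N i s \<omega>)\<bar> \<partial>M) \<le> ennreal (C * \<bar>t - s\<bar> powr (q / \<alpha>))"
  \<comment> \<open>Only first moments of the Poisson counts enter.\<close>
proof -
  obtain F where F: "\<forall>x. \<bar>f x\<bar> \<le> F" using f_bdd by (auto simp: bounded_real)
  obtain P where P: "\<forall>x. \<bar>\<psi> x\<bar> \<le> P" using psi_bdd by (auto simp: bounded_real)
  obtain B where B: "\<forall>x\<ge>0. \<forall>\<mu>\<in>P1_meas. \<bar>b x \<mu>\<bar> \<le> B" using b_bdd by blast
  obtain Cb where Cb: "\<forall>x\<ge>0. \<forall>x'\<ge>0. \<forall>\<mu>\<in>P1_meas. \<forall>\<mu>'\<in>P1_meas.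
      ennreal \<bar>b x \<mu> - b x' \<mu>'\<bar> \<le> ennreal Cb * (ennreal \<bar>a x - a x'\<bar> + Wa a \<mu> \<mu>')" using b_lip by blast
  obtain La where La: "\<forall>x y. \<bar>a x - a y\<bar> \<le> La * \<bar>x - y\<bar>" using a_lip by blast
  obtain Ch where Ch: "\<forall>x y. \<bar>h x - h y\<bar> \<le> Ch * \<bar>a x - a y\<bar>" using h_lip by blast
  interpret stable_particle_system \<alpha> q c \<nu> a f \<psi> h b M \<pi> X0 X F P B Cb "max La 0" "max Ch 0"
  proof (rule stable_particle_system.intro)
    show "\<forall>x y. \<bar>a x - a y\<bar> \<le> max La 0 * \<bar>x - y\<bar>" "\<forall>x y. \<bar>h x - h y\<bar> \<le> max Ch 0 * \<bar>a x - a y\<bar>"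
      using La Ch by (auto intro: le_max_zero_mult)
    show "f \<in> borel_measurable borel" "\<psi> \<in> borel_measurable borel"
      using f_lip psi_lip by (auto intro: lipschitz_borel_measurable)
    show "\<forall>i\<ge>1. AE \<omega> in M. 0 < X0 i \<omega>"
      using X0 nu0 by (auto intro: AE_pos_of_distr)
    show "\<forall>x. f x \<le> F" "0 \<le> F" "\<forall>x. \<psi> x \<le> P"
      using F P F[rule_format, of 0] by (auto simp: abs_le_iff)
  qed (use alpha nu q a0 a_concave a_mono a_tail B b_0 Cb psi_nonneg M prm sol in simp_all)
  show ?thesis using increment_hoelder by blast
qed

end
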